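(* Let $d\ge2$ be an integer, $\omega=e^{2\pi i/d}$, and for rational $x$ write $\omega^x:=e^{2\pi i x/d}$. For $r\in\{0,\dots,d-1\}$ and $s\in\{+1,-1\}$ define $c_m=\omega^{s\,m(m+2r+d)/2}$ for all integers $m$. Then $c_{m+d}=c_m$ for all $m$ (so indices may be taken in $\mathbb{Z}_d$), and: (i) for all $t\in\mathbb{Z}_d$, $\sum_{m\in\mathbb{Z}_d}c_m\overline{c_{m+t}}=d\,\delta_{t,0}$; (ii) for all $k,m\in\mathbb{Z}_d$, $\sum_{t\in\mathbb{Z}_d}c_tc_{k-t}c_m\omega^{mt}=\sum_{t\in\mathbb{Z}_d}c_tc_kc_{m-t}\omega^{kt}$. Consequently, for any $n\ge1$, with $X,Z$ on $\mathbb{C}^d$ given by $X|k\rangle=|k+1\bmod d\rangle$, $Z|k\rangle=\omega^k|k\rangle$, with $\gamma_{2j-1}=(\prod_{l<j}X_l)Z_j$, $\gamma_{2j}=\omega^{(d+1)/2}(\prod_{l\le j}X_l)Z_j$ on $(\mathbb{C}^d)^{\otimes n}$ ($j=1,\dots,n$), $\Lambda_i=\omega^{(d+1)/2}\gamma_i\gamma_{i+1}^\dagger$ and $U_i=\frac1{\sqrt d}\sum_{m=0}^{d-1}c_m\Lambda_i^m$ for $i=1,\dots,2n-1$, each $U_i$ is unitary, $U_iU_j=U_jU_i$ whenever $|i-j|>1$, and $U_iU_{i+1}U_i=U_{i+1}U_iU_{i+1}$ for $1\le i\le 2n-2$; i.e.\ $\sigma_i\mapsto U_i$ defines a unitary representation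 of the braid group $B_{2n}$. Moreover, for $d\ge3$ the $2d$ sequences $(c_m)_{m\in\mathbb{Z}_d}$ obtained from the $2d$ choices of $(r,s)$ are pairwise distinct.
   Context: The braid group $B_{2n}$ is generated by $\sigma_1,\dots,\sigma_{2n-1}$ subject to $\sigma_i\sigma_j=\sigma_j\sigma_i$ for $|i-j|>1$ and $\sigma_i\sigma_{i+1}\sigma_i=\sigma_{i+1}\sigma_i\sigma_{i+1}$. The operators $\gamma_j$ satisfy the $\mathbb{Z}_d$ parafermion relations $\gamma_j^d=\mathbb{1}$, $\gamma_j\gamma_k=\omega^{\mathrm{sgn}(k-j)}\gamma_k\gamma_j$. In condition (ii), $c_{k-t}$, $c_{m-t}$ use indices modulo $d$. *)

theory Defs
  imports Complex_Main "Jordan_Normal_Form.Schur_Decomposition"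
begin

definition omega_pow :: "nat \<Rightarrow> real \<Rightarrow> complex" where
  "omega_pow d x = exp (2 * of_real pi * \<i> * of_real x / of_nat d)"

definition cseq :: "nat \<Rightarrow> nat \<Rightarrow> int \<Rightarrow> int \<Rightarrow> complex" where
  "cseq d r s m = omega_pow d (real_of_int (s * m * (m + 2 * int r + int d)) / 2)"

text \<open>Basis of (C^d)^{\<otimes>n}: indices a < d^n; the state of tensor factor j (1 \<le> j \<le> n)
  is the (j-1)-th base-d digit of a.\<close>
definition digit :: "nat \<Rightarrow> nat \<Rightarrow> nat \<Rightarrow> nat" where
  "digit d j a = (a div d ^ (j - 1)) mod d"

definition Zop :: "nat \<Rightarrow> nat \<Rightarrow> nat \<Rightarrow> complex mat" where
  "Zop d n j = mat (d ^ n) (d ^ n)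
     (\<lambda>(a, b). if a = b then omega_pow d (real (digit d j a)) else 0)"

definition Xop :: "nat \<Rightarrow> nat \<Rightarrow> nat \<Rightarrow> complex mat" where
  "Xop d n l = mat (d ^ n) (d ^ n)
     (\<lambda>(a, b). if digit d l a = (digit d l b + 1) mod d
                 \<and> (\<forall>j\<in>{1..n} - {l}. digit d j a = digit d j b) then 1 else 0)"

definition Xprod :: "nat \<Rightarrow> nat \<Rightarrow> nat \<Rightarrow> complex mat" where
  "Xprod d n j = foldr (\<lambda>l M. Xop d n l * M) [1..<j] (1\<^sub>m (d ^ n))"

definition gamma :: "nat \<Rightarrow> nat \<Rightarrow> nat \<Rightarrow> complex mat" where
  "gamma d n i =
     (if odd i then Xprod d n ((i + 1) div 2) * Zop d n ((i + 1) div 2)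
      else omega_pow d ((real d + 1) / 2) \<cdot>\<^sub>m (Xprod d n (i div 2 + 1) * Zop d n (i div 2)))"

definition Lambda :: "nat \<Rightarrow> nat \<Rightarrow> nat \<Rightarrow> complex mat" where
  "Lambda d n i = omega_pow d ((real d + 1) / 2) \<cdot>\<^sub>m (gamma d n i * mat_adjoint (gamma d n (i + 1)))"

definition msum :: "nat \<Rightarrow> ('b \<Rightarrow> complex mat) \<Rightarrow> 'b set \<Rightarrow> complex mat" where
  "msum N f S = mat N N (\<lambda>ij. \<Sum>m\<in>S. f m $$ ij)"

definition Uop :: "nat \<Rightarrow> nat \<Rightarrow> int \<Rightarrow> nat \<Rightarrow> nat \<Rightarrow> complex mat" where
  "Uop d r s n i = (1 / complex_of_real (sqrt (real d))) \<cdot>\<^sub>m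
     msum (d ^ n) (\<lambda>m. cseq d r s (int m) \<cdot>\<^sub>m (Lambda d n i ^\<^sub>m m)) {0..<d}"

definition unitary_mat :: "nat \<Rightarrow> complex mat \<Rightarrow> bool" where
  "unitary_mat N U \<longleftrightarrow> U \<in> carrier_mat N N \<and> U * mat_adjoint U = 1\<^sub>m N \<and> mat_adjoint U * U = 1\<^sub>m N"

end

theory Submission
  imports Defs "HOL-Library.Real_Mod"
begin

text \<open>Since \<open>c\<^sub>m\<close> is \<open>\<omega>\<close> raised to a quadratic in \<open>m\<close>, one has
  \<open>c(t) c(k - t) = c(k) \<omega>^(s (t\<^sup>2 - k t))\<close>. Hence (i) is a sum of a nontrivial character, and
  both sides of (ii) are \<open>c(k) c(m)\<close> times quadratic Gauss sums that agree after the reflection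
  \<open>t \<mapsto> -t\<close>.

  On the tensor basis \<open>\<Lambda>(2j - 1) = X\<^sub>j\<^sup>-\<^sup>1\<close> and \<open>\<Lambda>(2j) = Z\<^sub>j Z\<^sub>j\<^sub>+\<^sub>1\<^sup>-\<^sup>1\<close>; these are unitaries of order \<open>d\<close>
  that commute unless adjacent, and adjacent ones satisfy \<open>\<Lambda>(i) \<Lambda>(i + 1) = \<omega> \<Lambda>(i + 1) \<Lambda>(i)\<close>.
  For any such pair \<open>A, B\<close>, condition (i) makes \<open>d\<^sup>-\<^sup>1\<^sup>/\<^sup>2 \<Sum>\<^sub>m c(m) A\<^sup>m\<close> unitary, and expanding
  both sides of the braid relation in the words \<open>B\<^sup>x A\<^sup>y\<close> reduces it coefficientwise to (ii).
  For distinctness, \<open>c(1)\<close> and \<open>c(2)\<close> determine \<open>s\<close> (this needs \<open>d \<ge> 3\<close>) and then \<open>r\<close>.\<close>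

section \<open>Roots of unity\<close>

lemma omega_pow_cis: "omega_pow d x = cis (2 * pi * x / d)"
  unfolding omega_pow_def cis_conv_exp
  by (cases "d = 0") (simp_all add: field_simps)

lemma omega_pow_add: "omega_pow d (x + y) = omega_pow d x * omega_pow d y"
  by (simp add: omega_pow_cis cis_mult add_divide_distrib distrib_left)

lemma omega_pow_0 [simp]: "omega_pow d 0 = 1"
  by (simp add: omega_pow_cis)

lemma omega_pow_nonzero [simp]: "omega_pow d x \<noteq> 0"
  by (simp add: omega_pow_cis)

lemma cnj_omega_pow: "cnj (omega_pow d x) = omega_pow d (- x)"
  by (simp add: omega_pow_cis cis_cnj)

lemma omega_pow_mult_cnj [simp]: "omega_pow d x * cnj (omega_pow d x) = 1"
  by (simp add: cnj_omega_pow flip: omega_pow_add)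

lemma omega_pow_power: "omega_pow d x ^ n = omega_pow d (real n * x)"
  by (induct n) (simp_all add: algebra_simps flip: omega_pow_add)

lemma omega_pow_eq_1_iff:
  assumes "d > 0"
  shows "omega_pow d x = 1 \<longleftrightarrow> (\<exists>k::int. x = k * real d)"
  unfolding omega_pow_cis cis_eq_1_iff using assms by (simp add: field_simps)

lemma omega_pow_periodic:
  fixes k :: int
  assumes "d > 0"
  shows "omega_pow d (x + k * real d) = omega_pow d x"
proof -
  have "omega_pow d (k * real d) = 1"
    using omega_pow_eq_1_iff[OF assms] by blast
  then show ?thesis by (simp add: omega_pow_add)
qed

lemma omega_pow_eq_iff:
  assumes "d > 0"
  shows "omega_pow d x = omega_pow d y \<longleftrightarrow> (\<exists>k::int. x - y = k * real d)"
proof -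
  have "omega_pow d x = omega_pow d (x - y) * omega_pow d y"
    by (simp flip: omega_pow_add)
  then have "omega_pow d x = omega_pow d y \<longleftrightarrow> omega_pow d (x - y) = 1"
    by auto
  with omega_pow_eq_1_iff[OF assms] show ?thesis by simp
qed

lemma omega_pow_of_int_eq_1_iff:
  assumes "d > 0"
  shows "omega_pow d (of_int j) = 1 \<longleftrightarrow> int d dvd j"
proof -
  have "(\<exists>k::int. real_of_int j = k * real d) \<longleftrightarrow> (\<exists>k. j = k * int d)"
    by (metis of_int_eq_iff of_int_mult of_int_of_nat_eq)
  then show ?thesis
    unfolding omega_pow_eq_1_iff[OF assms] by (auto simp: dvd_def mult.commute)
qed

lemma omega_pow_of_int_mod:
  assumes "d > 0"
  shows "omega_pow d (of_int (j mod int d)) = omega_pow d (of_int j)"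
proof -
  have "real_of_int j = of_int (j mod int d) + of_int (j div int d) * real d"
    by (metis mod_div_mult_eq of_int_add of_int_mult of_int_of_nat_eq)
  then show ?thesis
    using omega_pow_periodic[OF assms] by simp
qed

lemma omega_pow_of_nat_mod:
  assumes "d > 0"
  shows "omega_pow d (real (j mod d)) = omega_pow d (real j)"
  using omega_pow_of_int_mod[OF assms, of "int j"] by (simp flip: of_nat_mod)

lemma omega_pow_1_power:
  assumes "d > 0" and "int k mod int d = j mod int d"
  shows "omega_pow d 1 ^ k = omega_pow d (of_int j)"
  using omega_pow_of_int_mod[OF assms(1), of "int k"] omega_pow_of_int_mod[OF assms(1), of j] assms(2)
  by (simp add: omega_pow_power)

lemma sum_int_atLeastLessThan_nat: "(\<Sum>t\<in>{0..<int d}. g t) = (\<Sum>t\<in>{0..<d}. g (int t))"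
  using sum.atLeast_int_lessThan_int_shift[of g 0 d] by simp

lemma sum_omega_pow_mult:
  assumes "d > 0"
  shows "(\<Sum>m\<in>{0..<int d}. omega_pow d (of_int (j * m))) = (if int d dvd j then of_nat d else 0)"
proof -
  let ?x = "omega_pow d (of_int j)"
  have "(\<Sum>m\<in>{0..<int d}. omega_pow d (of_int (j * m))) = (\<Sum>m<d. ?x ^ m)"
    unfolding sum_int_atLeastLessThan_nat
    by (rule sum.cong) (auto simp: omega_pow_power algebra_simps lessThan_atLeast0)
  also have "\<dots> = (if int d dvd j then of_nat d else 0)"
  proof (cases "int d dvd j")
    case True
    then have "?x = 1" using omega_pow_of_int_eq_1_iff[OF assms] by blast
    then show ?thesis using True by simp
  next
    case False
    have "?x ^ d = 1"
      using omega_pow_periodic[OF assms, of 0 j] by (simp add: omega_pow_power mult.commute)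
    then show ?thesis
      using False omega_pow_of_int_eq_1_iff[OF assms] by (simp add: sum_gp_strict)
  qed
  finally show ?thesis .
qed

lemma sum_mod_reflect:
  assumes "d > 0" and periodic: "\<And>x. g (x mod int d) = g x"
  shows "(\<Sum>t\<in>{0..<int d}. g (c - t)) = (\<Sum>t\<in>{0..<int d}. g t)"
proof -
  have "bij_betw (\<lambda>t. (c - t) mod int d) {0..<int d} {0..<int d}"
    by (rule bij_betw_byWitness[where f' = "\<lambda>t. (c - t) mod int d"])
       (use assms(1) in \<open>auto simp: mod_diff_right_eq\<close>)
  then have "(\<Sum>t\<in>{0..<int d}. g ((c - t) mod int d)) = (\<Sum>t\<in>{0..<int d}. g t)"
    by (rule sum.reindex_bij_betw)
  then show ?thesis using periodic by simp
qed

section \<open>The sequence \<open>c\<close>\<close>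

lemma cseq_add_period:
  assumes "d > 0"
  shows "cseq d r s (m + int d) = cseq d r s m"
proof -
  have "real_of_int (s * (m + int d) * (m + int d + 2 * int r + int d)) / 2
      = real_of_int (s * m * (m + 2 * int r + int d)) / 2 + of_int (s * (m + int d + int r)) * real d"
    by (simp add: field_simps)
  then show ?thesis unfolding cseq_def by (simp only: omega_pow_periodic[OF assms])
qed

lemma cseq_add_mult_period:
  assumes "d > 0"
  shows "cseq d r s (m + k * int d) = cseq d r s m"
proof (induct k rule: int_induct[where k = 0])
  case (step1 i)
  then show ?case
    using cseq_add_period[OF assms, of r s "m + i * int d"] by (simp add: algebra_simps)
next
  case (step2 i)
  then show ?case
    using cseq_add_period[OF assms, of r s "m + (i - 1) * int d"] by (simp add: algebra_simps)
qed simp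

lemma cseq_mod:
  assumes "d > 0"
  shows "cseq d r s (m mod int d) = cseq d r s m"
  using cseq_add_mult_period[OF assms, of r s "m mod int d" "m div int d"] by simp

lemma cseq_mult_cseq_diff:
  "cseq d r s t * cseq d r s (k - t) = cseq d r s k * omega_pow d (of_int (s * (t * t - k * t)))"
proof -
  have "real_of_int (s * t * (t + 2 * int r + int d)) / 2
        + real_of_int (s * (k - t) * (k - t + 2 * int r + int d)) / 2
      = real_of_int (s * k * (k + 2 * int r + int d)) / 2 + real_of_int (s * (t * t - k * t))"
    by (simp add: field_simps)
  then show ?thesis unfolding cseq_def by (simp flip: omega_pow_add)
qed

lemma cseq_mult_cnj_cseq_add:
  "cseq d r s m * cnj (cseq d r s (m + t))
   = omega_pow d (- of_int (s * t * (t + 2 * int r + int d)) / 2) * omega_pow d (of_int (- s * t * m))"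
proof -
  have "real_of_int (s * m * (m + 2 * int r + int d)) / 2
        - real_of_int (s * (m + t) * (m + t + 2 * int r + int d)) / 2
      = - real_of_int (s * t * (t + 2 * int r + int d)) / 2 + real_of_int (- s * t * m)"
    by (simp add: field_simps)
  then show ?thesis unfolding cseq_def by (simp add: cnj_omega_pow flip: omega_pow_add)
qed

lemma cseq_autocorrelation:
  assumes "d > 0" and "s \<in> {1, -1}" and t: "t \<in> {0..<int d}"
  shows "(\<Sum>m\<in>{0..<int d}. cseq d r s m * cnj (cseq d r s (m + t))) = (if t = 0 then of_nat d else 0)"
proof -
  have "(\<Sum>m\<in>{0..<int d}. cseq d r s m * cnj (cseq d r s (m + t)))
      = omega_pow d (- of_int (s * t * (t + 2 * int r + int d)) / 2)
        * (\<Sum>m\<in>{0..<int d}. omega_pow d (of_int (- s * t * m)))"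
    unfolding cseq_mult_cnj_cseq_add sum_distrib_left ..
  moreover have "int d dvd - s * t \<longleftrightarrow> t = 0"
  proof
    assume "int d dvd - s * t"
    with \<open>s \<in> {1, -1}\<close> have "int d dvd t" by auto
    with t show "t = 0" by (cases "t > 0") (auto dest: zdvd_imp_le)
  qed simp
  ultimately show ?thesis
    using sum_omega_pow_mult[OF assms(1), of "- s * t"] by simp
qed

lemma omega_pow_quadratic_mod:
  assumes "d > 0"
  shows "omega_pow d (of_int (a * (x mod int d) * (x mod int d) + b * (x mod int d)))
       = omega_pow d (of_int (a * x * x + b * x))"
proof -
  have "(a * (x mod int d) * (x mod int d) + b * (x mod int d)) mod int d = (a * x * x + b * x) mod int d"
    by (intro mod_add_cong mod_mult_cong) simp_all
  then show ?thesis by (metis omega_pow_of_int_mod[OF assms])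
qed

text \<open>Reflecting \<open>t \<mapsto> -t\<close> turns the linear coefficient \<open>\<sigma> m - s k\<close> into \<open>s m - \<sigma> k\<close>,
  which equals \<open>\<sigma> k - s m\<close> when \<open>\<sigma> = -s\<close>.\<close>
lemma sum_quadratic_phase_swap:
  assumes "d > 0" and "s \<in> {1, -1::int}" and "\<sigma> \<in> {1, -1::int}"
  shows "(\<Sum>t\<in>{0..<int d}. omega_pow d (of_int (s * t * t + (\<sigma> * m - s * k) * t)))
       = (\<Sum>t\<in>{0..<int d}. omega_pow d (of_int (s * t * t + (\<sigma> * k - s * m) * t)))"
proof (cases "\<sigma> = s")
  case True
  let ?g = "\<lambda>t. omega_pow d (of_int (s * t * t + (\<sigma> * k - s * m) * t))"
  have "(\<Sum>t\<in>{0..<int d}. ?g (0 - t)) = (\<Sum>t\<in>{0..<int d}. ?g t)"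
    by (rule sum_mod_reflect[OF assms(1)]) (rule omega_pow_quadratic_mod[OF assms(1)])
  then show ?thesis using True by (simp add: algebra_simps)
next
  case False
  then have "\<sigma> * m - s * k = \<sigma> * k - s * m"
    using assms(2,3) by auto
  then show ?thesis by (simp only:)
qed

lemma cseq_triple_sum_identity:
  assumes "d > 0" and "s \<in> {1, -1::int}" and "\<sigma> \<in> {1, -1::int}"
  shows "(\<Sum>t\<in>{0..<int d}. cseq d r s t * cseq d r s (k - t) * cseq d r s m * omega_pow d (of_int (\<sigma> * m * t)))
       = (\<Sum>t\<in>{0..<int d}. cseq d r s t * cseq d r s k * cseq d r s (m - t) * omega_pow d (of_int (\<sigma> * k * t)))"
proof -
  let ?c = "cseq d r s"
  have L: "?c t * ?c (k - t) * ?c m * omega_pow d (of_int (\<sigma> * m * t))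
     = ?c k * ?c m * omega_pow d (of_int (s * t * t + (\<sigma> * m - s * k) * t))" for t
  proof -
    have "?c t * ?c (k - t) * ?c m * omega_pow d (of_int (\<sigma> * m * t))
       = ?c k * ?c m * (omega_pow d (of_int (s * (t * t - k * t))) * omega_pow d (of_int (\<sigma> * m * t)))"
      unfolding cseq_mult_cseq_diff by (simp add: ac_simps)
    then show ?thesis by (simp add: algebra_simps flip: omega_pow_add)
  qed
  have R: "?c t * ?c k * ?c (m - t) * omega_pow d (of_int (\<sigma> * k * t))
     = ?c k * ?c m * omega_pow d (of_int (s * t * t + (\<sigma> * k - s * m) * t))" for t
  proof -
    have "?c t * ?c k * ?c (m - t) * omega_pow d (of_int (\<sigma> * k * t))
       = ?c k * (?c t * ?c (m - t)) * omega_pow d (of_int (\<sigma> * k * t))"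
      by (simp add: ac_simps)
    also have "\<dots> = ?c k * ?c m * (omega_pow d (of_int (s * (t * t - m * t))) * omega_pow d (of_int (\<sigma> * k * t)))"
      unfolding cseq_mult_cseq_diff by (simp add: ac_simps)
    finally show ?thesis by (simp add: algebra_simps flip: omega_pow_add)
  qed
  show ?thesis
    unfolding L R sum_distrib_left[symmetric] using sum_quadratic_phase_swap[OF assms] by simp
qed

lemma cseq_braid_identity:
  assumes "d > 0" and "s \<in> {1, -1::int}"
  shows "(\<Sum>t\<in>{0..<int d}. cseq d r s t * cseq d r s ((k - t) mod int d) * cseq d r s m
            * omega_pow d (of_int (m * t)))
       = (\<Sum>t\<in>{0..<int d}. cseq d r s t * cseq d r s k * cseq d r s ((m - t) mod int d)
            * omega_pow d (of_int (k * t)))"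
  using cseq_triple_sum_identity[OF assms, where \<sigma> = 1 and k = k and m = m and r = r]
  by (simp add: cseq_mod[OF assms(1)])

lemma cseq_eq_imp_dvd:
  assumes "d > 0" and "cseq d r1 s1 m = cseq d r2 s2 m"
  shows "2 * int d dvd s1 * m * (m + 2 * int r1 + int d) - s2 * m * (m + 2 * int r2 + int d)"
proof -
  obtain k :: int where "real_of_int (s1 * m * (m + 2 * int r1 + int d)) / 2
      - real_of_int (s2 * m * (m + 2 * int r2 + int d)) / 2 = k * real d"
    using assms(2) unfolding cseq_def omega_pow_eq_iff[OF assms(1)] by blast
  then have "real_of_int (s1 * m * (m + 2 * int r1 + int d) - s2 * m * (m + 2 * int r2 + int d))
      = real_of_int (2 * int d * k)"
    by (simp add: field_simps)
  then show ?thesis unfolding of_int_eq_iff by simp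
qed

lemma cseq_injective:
  assumes d: "d \<ge> 3" and "r1 < d" and "r2 < d"
    and s1: "s1 \<in> {1, -1::int}" and s2: "s2 \<in> {1, -1::int}" and ne: "(r1, s1) \<noteq> (r2, s2)"
  shows "\<exists>m\<in>{0..<int d}. cseq d r1 s1 m \<noteq> cseq d r2 s2 m"
proof (rule ccontr)
  assume "\<not> ?thesis"
  then have "cseq d r1 s1 m = cseq d r2 s2 m" if "m \<in> {0..<int d}" for m
    using that by blast
  moreover have "1 \<in> {0..<int d}" "2 \<in> {0..<int d}" using d by auto
  ultimately have phase_diff:
    "2 * int d dvd s1 * m * (m + 2 * int r1 + int d) - s2 * m * (m + 2 * int r2 + int d)"
    if "m = 1 \<or> m = 2" for m
    using that d by (auto intro: cseq_eq_imp_dvd)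
  have unit: "int d dvd x" if "int d dvd s1 * x" for x
    using dvd_mult[OF that, of s1] s1 by auto
  show False
  proof (cases "s1 = s2")
    case True
    with ne have "r1 \<noteq> r2" by auto
    have "s1 * 1 * (1 + 2 * int r1 + int d) - s2 * 1 * (1 + 2 * int r2 + int d)
        = 2 * (s1 * (int r1 - int r2))"
      using True by (simp add: algebra_simps)
    then have "int d dvd s1 * (int r1 - int r2)"
      using phase_diff[of 1] by simp
    then have "int d dvd int r1 - int r2" by (rule unit)
    with \<open>r1 < d\<close> \<open>r2 < d\<close> \<open>r1 \<noteq> r2\<close> show False
      using dvd_imp_le_int[of "int r1 - int r2" "int d"] by auto
  next
    case False
    then have "s2 = - s1" using s1 s2 by auto
    let ?X = "1 + int r1 + int r2 + int d"
    have "s1 * 1 * (1 + 2 * int r1 + int d) - s2 * 1 * (1 + 2 * int r2 + int d) = 2 * (s1 * ?X)"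
      and "s1 * 2 * (2 + 2 * int r1 + int d) - s2 * 2 * (2 + 2 * int r2 + int d) = 2 * (s1 * ((1 + ?X) * 2))"
      using \<open>s2 = - s1\<close> by (simp_all add: algebra_simps)
    then have "int d dvd s1 * ?X" and "int d dvd s1 * ((1 + ?X) * 2)"
      using phase_diff[of 1] phase_diff[of 2] by simp_all
    then have X: "int d dvd ?X" and X1: "int d dvd (1 + ?X) * 2"
      using unit by blast+
    have "int d dvd (1 + ?X) * 2 - 2 * ?X"
      using dvd_diff[OF X1 dvd_mult[OF X]] .
    then have "int d dvd 2" by (simp add: algebra_simps)
    with d show False using zdvd_imp_le[of "int d" 2] by simp
  qed
qed

lemma smult_one_mat [simp]: "(1::'a::semiring_1) \<cdot>\<^sub>m A = A"
  by (rule eq_matI) auto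

lemma smult_smult_mat: "(a::'a::semiring_1) \<cdot>\<^sub>m (b \<cdot>\<^sub>m A) = (a * b) \<cdot>\<^sub>m A"
  by (rule eq_matI) (auto simp: mult.assoc)

lemma assoc_mult_mat_dims:
  "dim_col A = dim_row B \<Longrightarrow> dim_col B = dim_row C \<Longrightarrow> A * B * C = A * (B * (C :: 'a :: semiring_0 mat))"
  by (rule assoc_mult_mat[of A "dim_row A" "dim_col A" B "dim_col B" C "dim_col C"]) auto

lemma smult_mult_mat_left:
  "dim_col A = dim_row B \<Longrightarrow> (k \<cdot>\<^sub>m A) * B = (k :: 'a :: comm_semiring_0) \<cdot>\<^sub>m (A * B)"
  by (rule mult_smult_assoc_mat[of A "dim_row A" "dim_col A" B "dim_col B"]) auto

lemma smult_mult_mat_right: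
  "dim_col A = dim_row B \<Longrightarrow> A * (k \<cdot>\<^sub>m B) = (k :: 'a :: comm_semiring_0) \<cdot>\<^sub>m (A * B)"
  by (rule mult_smult_distrib[of A "dim_row A" "dim_col A" B "dim_col B"]) auto

lemma smult_mult_smult_mat:
  "dim_col A = dim_row B \<Longrightarrow> (a \<cdot>\<^sub>m A) * (b \<cdot>\<^sub>m B) = (a * b :: 'a :: comm_semiring_1) \<cdot>\<^sub>m (A * B)"
  by (simp add: smult_mult_mat_left smult_mult_mat_right smult_smult_mat mult.commute)

lemma index_mult_mat_square:
  assumes "A \<in> carrier_mat N N" "B \<in> carrier_mat N N" "i < N" "j < N"
  shows "(A * B) $$ (i, j) = (\<Sum>k<N. A $$ (i, k) * B $$ (k, j))"
  using assms by (simp add: scalar_prod_def lessThan_atLeast0)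

lemma mat_adjoint_dim [simp]:
  "dim_row (mat_adjoint A) = dim_col A" "dim_col (mat_adjoint A) = dim_row A"
  unfolding mat_adjoint_def by auto

lemma mat_adjoint_carrier [simp]: "A \<in> carrier_mat N N \<Longrightarrow> mat_adjoint A \<in> carrier_mat N N"
  by (rule carrier_matI) auto

lemma index_mat_adjoint [simp]:
  fixes A :: "complex mat"
  assumes "i < dim_col A" "j < dim_row A"
  shows "mat_adjoint A $$ (i, j) = cnj (A $$ (j, i))"
  using assms unfolding mat_adjoint_def by (simp add: mat_of_rows_index)

lemma mat_adjoint_mult:
  fixes A B :: "complex mat"
  assumes A: "A \<in> carrier_mat N N" and B: "B \<in> carrier_mat N N"
  shows "mat_adjoint (A * B) = mat_adjoint B * mat_adjoint A"
proof (rule eq_matI)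
  fix i j assume "i < dim_row (mat_adjoint B * mat_adjoint A)" "j < dim_col (mat_adjoint B * mat_adjoint A)"
  then have ij: "i < N" "j < N" using A B by auto
  have "mat_adjoint (A * B) $$ (i, j) = cnj ((A * B) $$ (j, i))"
    using A B ij by simp
  also have "(A * B) $$ (j, i) = (\<Sum>k<N. A $$ (j, k) * B $$ (k, i))"
    by (rule index_mult_mat_square[OF A B ij(2) ij(1)])
  also have "cnj (\<Sum>k<N. A $$ (j, k) * B $$ (k, i))
      = (\<Sum>k<N. mat_adjoint B $$ (i, k) * mat_adjoint A $$ (k, j))"
    using A B ij by (simp add: mult.commute)
  also have "\<dots> = (mat_adjoint B * mat_adjoint A) $$ (i, j)"
    using A B ij by (simp only: index_mult_mat_square[OF mat_adjoint_carrier[OF B] mat_adjoint_carrier[OF A] ij])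
  finally show "mat_adjoint (A * B) $$ (i, j) = (mat_adjoint B * mat_adjoint A) $$ (i, j)" .
qed (use A B in auto)

lemma mat_adjoint_smult: "mat_adjoint (c \<cdot>\<^sub>m (A :: complex mat)) = cnj c \<cdot>\<^sub>m mat_adjoint A"
  by (rule eq_matI) auto

lemma mat_adjoint_one [simp]: "mat_adjoint (1\<^sub>m N :: complex mat) = 1\<^sub>m N"
  by (rule eq_matI) auto

lemma pow_mat_add:
  assumes "A \<in> carrier_mat N N"
  shows "A ^\<^sub>m (a + b) = A ^\<^sub>m a * A ^\<^sub>m b"
  by (induct b) (use assms in \<open>simp_all add: assoc_mult_mat[of _ N N _ N _ N]\<close>)

lemma pow_mat_commute:
  assumes "A \<in> carrier_mat N N"
  shows "A * A ^\<^sub>m k = A ^\<^sub>m k * A"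
  using pow_mat_add[OF assms, of 1 k] pow_mat_add[OF assms, of k 1] assms by (simp add: add.commute)

lemma pow_mat_one [simp]: "(1\<^sub>m N :: 'a::semiring_1 mat) ^\<^sub>m k = 1\<^sub>m N"
  by (induct k) auto

lemma pow_mat_mult:
  assumes "A \<in> carrier_mat N N"
  shows "A ^\<^sub>m (a * b) = (A ^\<^sub>m a) ^\<^sub>m b"
proof (induct b)
  case (Suc b)
  then show ?case by (metis mult_Suc_right add.commute pow_mat.simps(2) pow_mat_add[OF assms])
qed (use assms in simp)

lemma pow_mat_mod:
  assumes A: "A \<in> carrier_mat N N" and "A ^\<^sub>m d = 1\<^sub>m N"
  shows "A ^\<^sub>m k = A ^\<^sub>m (k mod d)"
proof -
  have "A ^\<^sub>m k = (A ^\<^sub>m d) ^\<^sub>m (k div d) * A ^\<^sub>m (k mod d)"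
    by (metis div_mult_mod_eq mult.commute pow_mat_add[OF A] pow_mat_mult[OF A])
  then show ?thesis using assms by simp
qed

lemma mat_adjoint_pow:
  fixes A :: "complex mat"
  assumes A: "A \<in> carrier_mat N N"
  shows "mat_adjoint (A ^\<^sub>m k) = mat_adjoint A ^\<^sub>m k"
proof (induct k)
  case (Suc k)
  then show ?case
    using A pow_mat_commute[OF mat_adjoint_carrier[OF A]]
    by (simp add: mat_adjoint_mult[OF pow_carrier_mat[OF A] A])
qed (use A in simp)

lemma mat_adjoint_eq_pow:
  fixes A :: "complex mat"
  assumes A: "A \<in> carrier_mat N N" and "mat_adjoint A * A = 1\<^sub>m N" and "A ^\<^sub>m d = 1\<^sub>m N" and "d > 0"
  shows "mat_adjoint A = A ^\<^sub>m (d - 1)"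
proof -
  have "A ^\<^sub>m (d - 1) = mat_adjoint A * (A * A ^\<^sub>m (d - 1))"
    using assms by (simp flip: assoc_mult_mat_dims)
  also have "A * A ^\<^sub>m (d - 1) = A ^\<^sub>m d"
    using pow_mat_add[OF A, of 1 "d - 1"] \<open>d > 0\<close> A by simp
  finally show ?thesis using assms by simp
qed

lemma mult_pow_mat_q_commute:
  fixes A B :: "complex mat"
  assumes A: "A \<in> carrier_mat N N" and B: "B \<in> carrier_mat N N" and AB: "A * B = q \<cdot>\<^sub>m (B * A)"
  shows "A * B ^\<^sub>m b = (q ^ b) \<cdot>\<^sub>m (B ^\<^sub>m b * A)"
proof (induct b)
  case (Suc b)
  have "A * B ^\<^sub>m Suc b = (A * B ^\<^sub>m b) * B"
    using A B by (simp add: assoc_mult_mat_dims)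
  also have "\<dots> = (q ^ b) \<cdot>\<^sub>m (B ^\<^sub>m b * (A * B))"
    unfolding Suc using A B by (simp add: smult_mult_mat_left assoc_mult_mat_dims)
  also have "\<dots> = (q ^ Suc b) \<cdot>\<^sub>m (B ^\<^sub>m Suc b * A)"
    unfolding AB using A B by (simp add: smult_mult_mat_right smult_smult_mat assoc_mult_mat_dims mult.commute)
  finally show ?case .
qed (use A B in simp)

lemma pow_mat_q_commute:
  fixes A B :: "complex mat"
  assumes A: "A \<in> carrier_mat N N" and B: "B \<in> carrier_mat N N" and AB: "A * B = q \<cdot>\<^sub>m (B * A)"
  shows "A ^\<^sub>m a * B ^\<^sub>m b = (q ^ (a * b)) \<cdot>\<^sub>m (B ^\<^sub>m b * A ^\<^sub>m a)"
proof (induct a)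
  case (Suc a)
  have "A ^\<^sub>m Suc a * B ^\<^sub>m b = A ^\<^sub>m a * (A * B ^\<^sub>m b)"
    using A B by (simp add: assoc_mult_mat_dims)
  also have "\<dots> = (q ^ b) \<cdot>\<^sub>m ((A ^\<^sub>m a * B ^\<^sub>m b) * A)"
    unfolding mult_pow_mat_q_commute[OF A B AB] using A B by (simp add: smult_mult_mat_right assoc_mult_mat_dims)
  also have "\<dots> = (q ^ (Suc a * b)) \<cdot>\<^sub>m (B ^\<^sub>m b * A ^\<^sub>m Suc a)"
    unfolding Suc using A B
    by (simp add: smult_mult_mat_left smult_smult_mat assoc_mult_mat_dims power_add mult.commute)
  finally show ?case .
qed (use A B in simp)

lemma mod_add_pred_mult_cancel:
  assumes "(d::nat) > 0"
  shows "(a + b + (d - 1) * b) mod d = a mod d"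
proof -
  have "a + b + (d - 1) * b = a + d * b"
    using assms by (cases d) (auto simp: algebra_simps)
  then show ?thesis by (simp add: add.assoc)
qed

lemma sum_mod_shift:
  assumes "(d::nat) > 0"
  shows "(\<Sum>a\<in>{0..<d}. F ((a + b) mod d)) = (\<Sum>a\<in>{0..<d}. F a)"
proof -
  have "bij_betw (\<lambda>a. (a + b) mod d) {0..<d} {0..<d}"
  proof (rule bij_betw_byWitness[where f' = "\<lambda>a. (a + (d - 1) * b) mod d"])
    show "\<forall>a\<in>{0..<d}. ((a + b) mod d + (d - 1) * b) mod d = a"
      using mod_add_pred_mult_cancel[OF assms] by (simp add: mod_add_left_eq)
    show "\<forall>a\<in>{0..<d}. ((a + (d - 1) * b) mod d + b) mod d = a"
      using mod_add_pred_mult_cancel[OF assms] by (simp add: mod_add_right_eq ac_simps)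
  qed (use assms in auto)
  then show ?thesis by (rule sum.reindex_bij_betw)
qed

lemma msum_carrier [simp]: "msum N f S \<in> carrier_mat N N"
  unfolding msum_def by simp

lemma msum_dim [simp]: "dim_row (msum N f S) = N" "dim_col (msum N f S) = N"
  unfolding msum_def by simp_all

lemma index_msum [simp]: "i < N \<Longrightarrow> j < N \<Longrightarrow> msum N f S $$ (i, j) = (\<Sum>x\<in>S. f x $$ (i, j))"
  unfolding msum_def by simp

lemma msum_cong: "(\<And>x. x \<in> S \<Longrightarrow> f x = g x) \<Longrightarrow> msum N f S = msum N g S"
  unfolding msum_def by (auto intro!: sum.cong)

lemma mult_msum_left:
  assumes M: "M \<in> carrier_mat N N" and f: "\<And>x. x \<in> S \<Longrightarrow> f x \<in> carrier_mat N N"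
  shows "M * msum N f S = msum N (\<lambda>x. M * f x) S"
proof (rule eq_matI)
  fix i j assume "i < dim_row (msum N (\<lambda>x. M * f x) S)" "j < dim_col (msum N (\<lambda>x. M * f x) S)"
  then have ij: "i < N" "j < N" by auto
  have "(M * msum N f S) $$ (i, j) = (\<Sum>k<N. M $$ (i, k) * (\<Sum>x\<in>S. f x $$ (k, j)))"
    using ij by (simp add: index_mult_mat_square[OF M msum_carrier ij])
  also have "\<dots> = (\<Sum>x\<in>S. \<Sum>k<N. M $$ (i, k) * f x $$ (k, j))"
    by (simp add: sum_distrib_left sum.swap[of _ S])
  also have "\<dots> = msum N (\<lambda>x. M * f x) S $$ (i, j)"
    using ij by (auto simp: index_mult_mat_square[OF M f[OF _] ij] intro!: sum.cong)
  finally show "(M * msum N f S) $$ (i, j) = msum N (\<lambda>x. M * f x) S $$ (i, j)" .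
qed (use M in auto)

lemma mult_msum_right:
  assumes M: "M \<in> carrier_mat N N" and f: "\<And>x. x \<in> S \<Longrightarrow> f x \<in> carrier_mat N N"
  shows "msum N f S * M = msum N (\<lambda>x. f x * M) S"
proof (rule eq_matI)
  fix i j assume "i < dim_row (msum N (\<lambda>x. f x * M) S)" "j < dim_col (msum N (\<lambda>x. f x * M) S)"
  then have ij: "i < N" "j < N" by auto
  have "(msum N f S * M) $$ (i, j) = (\<Sum>k<N. (\<Sum>x\<in>S. f x $$ (i, k)) * M $$ (k, j))"
    using ij by (simp add: index_mult_mat_square[OF msum_carrier M ij])
  also have "\<dots> = (\<Sum>x\<in>S. \<Sum>k<N. f x $$ (i, k) * M $$ (k, j))"
    by (simp add: sum_distrib_right sum.swap[of _ S])
  also have "\<dots> = msum N (\<lambda>x. f x * M) S $$ (i, j)"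
    using ij by (auto simp: index_mult_mat_square[OF f[OF _] M ij] intro!: sum.cong)
  finally show "(msum N f S * M) $$ (i, j) = msum N (\<lambda>x. f x * M) S $$ (i, j)" .
qed (use M in auto)

lemma msum_mult_msum:
  assumes f: "\<And>x. x \<in> S \<Longrightarrow> f x \<in> carrier_mat N N" and g: "\<And>y. y \<in> T \<Longrightarrow> g y \<in> carrier_mat N N"
  shows "msum N f S * msum N g T = msum N (\<lambda>x. msum N (\<lambda>y. f x * g y) T) S"
  by (simp add: mult_msum_right[OF msum_carrier f] mult_msum_left[OF f g] cong: msum_cong)

lemma msum_mult_msum_mult_msum:
  assumes f: "\<And>x. x \<in> S \<Longrightarrow> f x \<in> carrier_mat N N" and g: "\<And>y. y \<in> T \<Longrightarrow> g y \<in> carrier_mat N N"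
    and h: "\<And>z. z \<in> U \<Longrightarrow> h z \<in> carrier_mat N N"
  shows "msum N f S * msum N g T * msum N h U
       = msum N (\<lambda>x. msum N (\<lambda>y. msum N (\<lambda>z. f x * g y * h z) U) T) S"
proof -
  have "msum N f S * msum N g T * msum N h U = msum N (\<lambda>x. msum N (\<lambda>y. f x * g y) T) S * msum N h U"
    by (simp only: msum_mult_msum[OF f g])
  also have "\<dots> = msum N (\<lambda>x. msum N (\<lambda>y. f x * g y) T * msum N h U) S"
    by (rule mult_msum_right) (use f g in auto)
  also have "\<dots> = msum N (\<lambda>x. msum N (\<lambda>y. f x * g y * msum N h U) T) S"
    by (rule msum_cong, rule mult_msum_right) (use f g in \<open>auto intro: mult_carrier_mat\<close>)
  also have "\<dots> = msum N (\<lambda>x. msum N (\<lambda>y. msum N (\<lambda>z. f x * g y * h z) U) T) S"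
    by (rule msum_cong, rule msum_cong, rule mult_msum_left) (use f g h in \<open>auto intro: mult_carrier_mat\<close>)
  finally show ?thesis .
qed

lemma msum_smult: "msum N (\<lambda>x. c x \<cdot>\<^sub>m M) S = (\<Sum>x\<in>S. c x) \<cdot>\<^sub>m M" if "M \<in> carrier_mat N N"
  by (rule eq_matI) (use that in \<open>auto simp: msum_def sum_distrib_right\<close>)

lemma msum_swap: "msum N (\<lambda>x. msum N (\<lambda>y. F x y) T) S = msum N (\<lambda>y. msum N (\<lambda>x. F x y) S) T"
  by (rule eq_matI) (auto simp: msum_def intro: sum.swap)

lemma msum_mod_shift:
  assumes "(d::nat) > 0"
  shows "msum N (\<lambda>a. F ((a + b) mod d)) {0..<d} = msum N F {0..<d}"
  by (rule eq_matI) (simp_all add: sum_mod_shift[OF assms, of "\<lambda>a. F a $$ _"])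

lemma msum_delta:
  assumes "(d::nat) > 0" and "\<And>t. M t \<in> carrier_mat N N"
  shows "msum N (\<lambda>t. (if t = 0 then x else 0) \<cdot>\<^sub>m M t) {0..<d} = x \<cdot>\<^sub>m M 0"
proof (rule eq_matI)
  fix i j assume "i < dim_row (x \<cdot>\<^sub>m M 0)" "j < dim_col (x \<cdot>\<^sub>m M 0)"
  then have ij: "i < N" "j < N" using assms(2)[of 0] by auto
  have "(\<Sum>t\<in>{0..<d}. ((if t = 0 then x else 0) \<cdot>\<^sub>m M t) $$ (i, j))
      = (\<Sum>t\<in>{0..<d}. if t = 0 then x * M 0 $$ (i, j) else 0)"
    using ij by (intro sum.cong) (auto simp: carrier_matD[OF assms(2)])
  then show "msum N (\<lambda>t. (if t = 0 then x else 0) \<cdot>\<^sub>m M t) {0..<d} $$ (i, j) = (x \<cdot>\<^sub>m M 0) $$ (i, j)"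
    using assms(1) ij by (simp add: carrier_matD[OF assms(2)])
qed (use assms(2)[of 0] in auto)

lemma mat_adjoint_msum:
  fixes f :: "'b \<Rightarrow> complex mat"
  assumes f: "\<And>x. x \<in> S \<Longrightarrow> f x \<in> carrier_mat N N"
  shows "mat_adjoint (msum N f S) = msum N (\<lambda>x. mat_adjoint (f x)) S"
proof (rule eq_matI)
  fix i j assume "i < dim_row (msum N (\<lambda>x. mat_adjoint (f x)) S)" "j < dim_col (msum N (\<lambda>x. mat_adjoint (f x)) S)"
  then have ij: "i < N" "j < N" by auto
  have "mat_adjoint (f x) $$ (i, j) = cnj (f x $$ (j, i))" if "x \<in> S" for x
    using f[OF that] ij by simp
  then show "mat_adjoint (msum N f S) $$ (i, j) = msum N (\<lambda>x. mat_adjoint (f x)) S $$ (i, j)"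
    using ij by (simp add: cnj_sum)
qed auto

section \<open>Power series of a matrix of finite order\<close>

definition power_series_mat :: "nat \<Rightarrow> nat \<Rightarrow> (nat \<Rightarrow> complex) \<Rightarrow> complex mat \<Rightarrow> complex mat" where
  "power_series_mat N d c A = msum N (\<lambda>m. c m \<cdot>\<^sub>m (A ^\<^sub>m m)) {0..<d}"

lemma power_series_mat_carrier [simp]: "power_series_mat N d c A \<in> carrier_mat N N"
  unfolding power_series_mat_def by simp

lemma power_series_mat_dim [simp]:
  "dim_row (power_series_mat N d c A) = N" "dim_col (power_series_mat N d c A) = N"
  unfolding power_series_mat_def by simp_all

lemma power_series_mat_mult_adjoint:
  fixes A :: "complex mat"
  assumes A: "A \<in> carrier_mat N N" and "mat_adjoint A * A = 1\<^sub>m N" and Ad: "A ^\<^sub>m d = 1\<^sub>m N" and d: "d > 0"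
    and autocorrelation: "\<And>t. t < d \<Longrightarrow>
      (\<Sum>b\<in>{0..<d}. cnj (c b) * c ((t + b) mod d)) = (if t = 0 then of_nat d else 0)"
  shows "power_series_mat N d c A * mat_adjoint (power_series_mat N d c A) = of_nat d \<cdot>\<^sub>m 1\<^sub>m N"
proof -
  have "mat_adjoint (power_series_mat N d c A) = msum N (\<lambda>b. cnj (c b) \<cdot>\<^sub>m A ^\<^sub>m ((d - 1) * b)) {0..<d}"
    using A unfolding power_series_mat_def
    by (simp add: mat_adjoint_msum mat_adjoint_smult mat_adjoint_pow[OF A]
        mat_adjoint_eq_pow[OF assms(1-4)] pow_mat_mult[OF A])
  then have "power_series_mat N d c A * mat_adjoint (power_series_mat N d c A)
      = msum N (\<lambda>a. msum N (\<lambda>b. (c a \<cdot>\<^sub>m A ^\<^sub>m a) * (cnj (c b) \<cdot>\<^sub>m A ^\<^sub>m ((d - 1) * b))) {0..<d}) {0..<d}"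
    using A unfolding power_series_mat_def by (simp add: msum_mult_msum)
  also have "\<dots> = msum N (\<lambda>b. msum N (\<lambda>a. (c a * cnj (c b)) \<cdot>\<^sub>m A ^\<^sub>m ((a + (d - 1) * b) mod d)) {0..<d}) {0..<d}"
  proof -
    have "(c a \<cdot>\<^sub>m A ^\<^sub>m a) * (cnj (c b) \<cdot>\<^sub>m A ^\<^sub>m ((d - 1) * b))
        = (c a * cnj (c b)) \<cdot>\<^sub>m A ^\<^sub>m ((a + (d - 1) * b) mod d)" for a b
      using A pow_mat_mod[OF A Ad, of "a + (d - 1) * b"]
      by (simp add: smult_mult_smult_mat pow_mat_add[OF A, symmetric])
    then show ?thesis by (simp only:) (rule msum_swap)
  qed
  also have "\<dots> = msum N (\<lambda>b. msum N (\<lambda>t. (c ((t + b) mod d) * cnj (c b)) \<cdot>\<^sub>m A ^\<^sub>m t) {0..<d}) {0..<d}"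
  proof (rule msum_cong)
    fix b
    let ?F = "\<lambda>a. (c a * cnj (c b)) \<cdot>\<^sub>m A ^\<^sub>m ((a + (d - 1) * b) mod d)"
    have "msum N ?F {0..<d} = msum N (\<lambda>t. ?F ((t + b) mod d)) {0..<d}"
      by (rule msum_mod_shift[OF d, symmetric])
    also have "\<dots> = msum N (\<lambda>t. (c ((t + b) mod d) * cnj (c b)) \<cdot>\<^sub>m A ^\<^sub>m t) {0..<d}"
      using mod_add_pred_mult_cancel[OF d, of _ b] by (intro msum_cong) (simp add: mod_add_left_eq)
    finally show "msum N ?F {0..<d} = msum N (\<lambda>t. (c ((t + b) mod d) * cnj (c b)) \<cdot>\<^sub>m A ^\<^sub>m t) {0..<d}" .
  qed
  also have "\<dots> = msum N (\<lambda>t. (\<Sum>b\<in>{0..<d}. cnj (c b) * c ((t + b) mod d)) \<cdot>\<^sub>m A ^\<^sub>m t) {0..<d}"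
    using A by (subst msum_swap) (simp add: msum_smult mult.commute cong: msum_cong)
  also have "\<dots> = msum N (\<lambda>t. (if t = 0 then of_nat d else 0) \<cdot>\<^sub>m A ^\<^sub>m t) {0..<d}"
    using autocorrelation by (intro msum_cong) simp
  also have "\<dots> = of_nat d \<cdot>\<^sub>m 1\<^sub>m N"
    using msum_delta[OF d, of "\<lambda>t. A ^\<^sub>m t"] A by simp
  finally show ?thesis .
qed

lemma unitary_power_series_mat:
  fixes A :: "complex mat"
  assumes A: "A \<in> carrier_mat N N" and "mat_adjoint A * A = 1\<^sub>m N" and "A ^\<^sub>m d = 1\<^sub>m N" and "d > 0"
    and "\<And>t. t < d \<Longrightarrow> (\<Sum>b\<in>{0..<d}. cnj (c b) * c ((t + b) mod d)) = (if t = 0 then of_nat d else 0)"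
  shows "unitary_mat N ((1 / complex_of_real (sqrt (real d))) \<cdot>\<^sub>m power_series_mat N d c A)"
proof -
  let ?k = "1 / complex_of_real (sqrt (real d))"
  let ?U = "?k \<cdot>\<^sub>m power_series_mat N d c A"
  have "?k * cnj ?k * of_nat d = 1"
    using \<open>d > 0\<close> by (simp add: of_real_mult[symmetric] flip: of_real_divide)
  then have "?U * mat_adjoint ?U = 1\<^sub>m N"
    using power_series_mat_mult_adjoint[OF assms]
    by (simp add: mat_adjoint_smult smult_mult_smult_mat smult_smult_mat)
  moreover then have "mat_adjoint ?U * ?U = 1\<^sub>m N"
    by (rule mat_mult_left_right_inverse[rotated 2]) auto
  ultimately show ?thesis unfolding unitary_mat_def by simp
qed

lemma power_series_mat_commute:
  fixes A B :: "complex mat"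
  assumes A: "A \<in> carrier_mat N N" and B: "B \<in> carrier_mat N N" and AB: "A * B = B * A"
  shows "power_series_mat N d c A * power_series_mat N d c B = power_series_mat N d c B * power_series_mat N d c A"
proof -
  have AB': "A * B = 1 \<cdot>\<^sub>m (B * A)" using AB by simp
  have "power_series_mat N d c A * power_series_mat N d c B
      = msum N (\<lambda>a. msum N (\<lambda>b. (c a * c b) \<cdot>\<^sub>m (B ^\<^sub>m b * A ^\<^sub>m a)) {0..<d}) {0..<d}"
    using A B unfolding power_series_mat_def
    by (simp add: msum_mult_msum smult_mult_smult_mat pow_mat_q_commute[OF A B AB'] cong: msum_cong)
  also have "\<dots> = msum N (\<lambda>b. msum N (\<lambda>a. (c b * c a) \<cdot>\<^sub>m (B ^\<^sub>m b * A ^\<^sub>m a)) {0..<d}) {0..<d}"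
    by (subst msum_swap) (simp add: mult.commute)
  also have "\<dots> = power_series_mat N d c B * power_series_mat N d c A"
    using A B unfolding power_series_mat_def by (simp add: msum_mult_msum smult_mult_smult_mat)
  finally show ?thesis .
qed

lemma msum_mod_reindex:
  assumes d: "(d::nat) > 0" and a: "a < d"
  shows "msum N (\<lambda>e. F e ((a + e) mod d)) {0..<d} = msum N (\<lambda>k. F ((k + (d - a)) mod d) k) {0..<d}"
proof -
  have "msum N (\<lambda>e. F e ((a + e) mod d)) {0..<d}
      = msum N (\<lambda>k. F ((k + (d - a)) mod d) ((a + (k + (d - a)) mod d) mod d)) {0..<d}"
    using msum_mod_shift[OF d, of N "\<lambda>e. F e ((a + e) mod d)" "d - a"] by simp
  also have "\<dots> = msum N (\<lambda>k. F ((k + (d - a)) mod d) k) {0..<d}"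
  proof (rule msum_cong)
    fix k assume "k \<in> {0..<d}"
    moreover have "(a + (k + (d - a)) mod d) mod d = (k + d) mod d"
      using a by (simp add: mod_add_right_eq)
    ultimately show "F ((k + (d - a)) mod d) ((a + (k + (d - a)) mod d) mod d) = F ((k + (d - a)) mod d) k"
      by simp
  qed
  finally show ?thesis .
qed

lemma power_series_mat_ABA:
  fixes A B :: "complex mat"
  assumes A: "A \<in> carrier_mat N N" and B: "B \<in> carrier_mat N N"
    and Ad: "A ^\<^sub>m d = 1\<^sub>m N" and AB: "A * B = q \<cdot>\<^sub>m (B * A)" and d: "d > 0"
  shows "power_series_mat N d c A * power_series_mat N d c B * power_series_mat N d c A
    = msum N (\<lambda>x. msum N (\<lambda>y. (\<Sum>a\<in>{0..<d}. c a * c x * c ((y + (d - a)) mod d) * q ^ (a * x))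
        \<cdot>\<^sub>m (B ^\<^sub>m x * A ^\<^sub>m y)) {0..<d}) {0..<d}" (is "_ = ?rhs")
proof -
  have "(c a \<cdot>\<^sub>m A ^\<^sub>m a) * (c b \<cdot>\<^sub>m B ^\<^sub>m b) * (c e \<cdot>\<^sub>m A ^\<^sub>m e)
      = (c a * c b * c e * q ^ (a * b)) \<cdot>\<^sub>m (B ^\<^sub>m b * A ^\<^sub>m ((a + e) mod d))" for a b e
  proof -
    have "A ^\<^sub>m a * B ^\<^sub>m b * A ^\<^sub>m e = (q ^ (a * b)) \<cdot>\<^sub>m (B ^\<^sub>m b * A ^\<^sub>m a) * A ^\<^sub>m e"
      by (simp only: pow_mat_q_commute[OF A B AB])
    also have "\<dots> = (q ^ (a * b)) \<cdot>\<^sub>m (B ^\<^sub>m b * A ^\<^sub>m ((a + e) mod d))"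
      using A B pow_mat_mod[OF A Ad, of "a + e"]
      by (simp add: smult_mult_mat_left assoc_mult_mat_dims pow_mat_add[OF A, symmetric])
    finally show ?thesis
      using A B by (simp add: smult_mult_smult_mat smult_smult_mat mult.assoc)
  qed
  then have "power_series_mat N d c A * power_series_mat N d c B * power_series_mat N d c A
      = msum N (\<lambda>a. msum N (\<lambda>b. msum N (\<lambda>e. (c a * c b * c e * q ^ (a * b))
          \<cdot>\<^sub>m (B ^\<^sub>m b * A ^\<^sub>m ((a + e) mod d))) {0..<d}) {0..<d}) {0..<d}"
    unfolding power_series_mat_def using A B by (simp add: msum_mult_msum_mult_msum)
  also have "\<dots> = msum N (\<lambda>a. msum N (\<lambda>b. msum N (\<lambda>k. (c a * c b * c ((k + (d - a)) mod d) * q ^ (a * b))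
      \<cdot>\<^sub>m (B ^\<^sub>m b * A ^\<^sub>m k)) {0..<d}) {0..<d}) {0..<d}"
    by (intro msum_cong msum_mod_reindex[OF d]) simp
  also have "\<dots> = msum N (\<lambda>b. msum N (\<lambda>k. msum N (\<lambda>a. (c a * c b * c ((k + (d - a)) mod d) * q ^ (a * b))
      \<cdot>\<^sub>m (B ^\<^sub>m b * A ^\<^sub>m k)) {0..<d}) {0..<d}) {0..<d}"
    by (subst msum_swap) (rule msum_cong, rule msum_swap)
  also have "\<dots> = ?rhs"
    by (intro msum_cong msum_smult) (use A B in \<open>auto intro: mult_carrier_mat\<close>)
  finally show ?thesis .
qed

lemma power_series_mat_BAB:
  fixes A B :: "complex mat"
  assumes A: "A \<in> carrier_mat N N" and B: "B \<in> carrier_mat N N"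
    and Bd: "B ^\<^sub>m d = 1\<^sub>m N" and AB: "A * B = q \<cdot>\<^sub>m (B * A)" and d: "d > 0"
  shows "power_series_mat N d c B * power_series_mat N d c A * power_series_mat N d c B
    = msum N (\<lambda>x. msum N (\<lambda>y. (\<Sum>a\<in>{0..<d}. c a * c y * c ((x + (d - a)) mod d) * q ^ (y * ((x + (d - a)) mod d)))
        \<cdot>\<^sub>m (B ^\<^sub>m x * A ^\<^sub>m y)) {0..<d}) {0..<d}" (is "_ = ?rhs")
proof -
  have "(c a \<cdot>\<^sub>m B ^\<^sub>m a) * (c b \<cdot>\<^sub>m A ^\<^sub>m b) * (c e \<cdot>\<^sub>m B ^\<^sub>m e)
      = (c a * c b * c e * q ^ (b * e)) \<cdot>\<^sub>m (B ^\<^sub>m ((a + e) mod d) * A ^\<^sub>m b)" for a b e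
  proof -
    have "B ^\<^sub>m a * A ^\<^sub>m b * B ^\<^sub>m e = B ^\<^sub>m a * (A ^\<^sub>m b * B ^\<^sub>m e)"
      using A B by (simp add: assoc_mult_mat_dims)
    also have "\<dots> = B ^\<^sub>m a * ((q ^ (b * e)) \<cdot>\<^sub>m (B ^\<^sub>m e * A ^\<^sub>m b))"
      by (simp only: pow_mat_q_commute[OF A B AB])
    also have "\<dots> = (q ^ (b * e)) \<cdot>\<^sub>m (B ^\<^sub>m ((a + e) mod d) * A ^\<^sub>m b)"
      using A B pow_mat_mod[OF B Bd, of "a + e"]
      by (simp add: smult_mult_mat_right assoc_mult_mat_dims[symmetric] pow_mat_add[OF B, symmetric])
    finally show ?thesis
      using A B by (simp add: smult_mult_smult_mat smult_smult_mat mult.assoc)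
  qed
  then have "power_series_mat N d c B * power_series_mat N d c A * power_series_mat N d c B
      = msum N (\<lambda>a. msum N (\<lambda>b. msum N (\<lambda>e. (c a * c b * c e * q ^ (b * e))
          \<cdot>\<^sub>m (B ^\<^sub>m ((a + e) mod d) * A ^\<^sub>m b)) {0..<d}) {0..<d}) {0..<d}"
    unfolding power_series_mat_def using A B by (simp add: msum_mult_msum_mult_msum)
  also have "\<dots> = msum N (\<lambda>a. msum N (\<lambda>b. msum N (\<lambda>k. (c a * c b * c ((k + (d - a)) mod d)
      * q ^ (b * ((k + (d - a)) mod d))) \<cdot>\<^sub>m (B ^\<^sub>m k * A ^\<^sub>m b)) {0..<d}) {0..<d}) {0..<d}"
    by (intro msum_cong msum_mod_reindex[OF d]) simp
  also have "\<dots> = msum N (\<lambda>k. msum N (\<lambda>b. msum N (\<lambda>a. (c a * c b * c ((k + (d - a)) mod d)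
      * q ^ (b * ((k + (d - a)) mod d))) \<cdot>\<^sub>m (B ^\<^sub>m k * A ^\<^sub>m b)) {0..<d}) {0..<d}) {0..<d}"
    by (subst msum_swap) (subst (2) msum_swap, rule msum_cong, rule msum_swap)
  also have "\<dots> = ?rhs"
    by (intro msum_cong msum_smult) (use A B in \<open>auto intro: mult_carrier_mat\<close>)
  finally show ?thesis .
qed

lemma power_series_mat_braid:
  fixes A B :: "complex mat"
  assumes A: "A \<in> carrier_mat N N" and B: "B \<in> carrier_mat N N"
    and Ad: "A ^\<^sub>m d = 1\<^sub>m N" and Bd: "B ^\<^sub>m d = 1\<^sub>m N" and AB: "A * B = q \<cdot>\<^sub>m (B * A)" and d: "d > 0"
    and braid_identity: "\<And>x y. x < d \<Longrightarrow> y < d \<Longrightarrow>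
       (\<Sum>a\<in>{0..<d}. c a * c x * c ((y + (d - a)) mod d) * q ^ (a * x))
     = (\<Sum>a\<in>{0..<d}. c a * c y * c ((x + (d - a)) mod d) * q ^ (y * ((x + (d - a)) mod d)))"
  shows "power_series_mat N d c A * power_series_mat N d c B * power_series_mat N d c A
       = power_series_mat N d c B * power_series_mat N d c A * power_series_mat N d c B"
  unfolding power_series_mat_ABA[OF A B Ad AB d] power_series_mat_BAB[OF A B Bd AB d]
  using braid_identity by (intro msum_cong) simp

section \<open>Digits of the tensor basis and monomial matrices\<close>

definition from_digits :: "nat \<Rightarrow> nat \<Rightarrow> (nat \<Rightarrow> nat) \<Rightarrow> nat" where
  "from_digits d n f = (\<Sum>l\<in>{1..n}. f l * d ^ (l - 1))"

definition shift_digits :: "nat \<Rightarrow> nat \<Rightarrow> (nat \<Rightarrow> nat) \<Rightarrow> nat \<Rightarrow> nat" where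
  "shift_digits d n v b = from_digits d n (\<lambda>l. (digit d l b + v l) mod d)"

lemma digit_less: "d > 0 \<Longrightarrow> digit d j a < d"
  unfolding digit_def by simp

lemma digit_mod_power:
  assumes d: "d > 0" and l: "1 \<le> l" "l \<le> n"
  shows "digit d l (a mod d ^ n) = digit d l a"
proof -
  let ?P = "d ^ (l - 1)" and ?Q = "d ^ (n - (l - 1))"
  have "d ^ n = ?P * ?Q" using l by (simp flip: power_add)
  then have "a mod d ^ n = a mod ?P + ?P * (a div ?P mod ?Q)"
    by (simp add: mod_mult2_eq add.commute)
  then have "a mod d ^ n div ?P = a div ?P mod ?Q"
    using d by simp
  moreover have "d dvd ?Q" using l by (simp add: dvd_power)
  ultimately show ?thesis unfolding digit_def by (simp add: mod_mod_cancel)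
qed

lemma from_digits_Suc: "from_digits d (Suc n) f = from_digits d n f + f (Suc n) * d ^ n"
  unfolding from_digits_def by (simp add: sum.cl_ivl_Suc)

lemma from_digits_cong: "(\<And>l. l \<in> {1..n} \<Longrightarrow> f l = g l) \<Longrightarrow> from_digits d n f = from_digits d n g"
  unfolding from_digits_def by (auto intro!: sum.cong)

lemma from_digits_less:
  assumes "\<And>l. l \<in> {1..n} \<Longrightarrow> f l < d"
  shows "from_digits d n f < d ^ n"
  using assms
proof (induct n)
  case (Suc n)
  then have "from_digits d n f < d ^ n" by auto
  moreover have "(f (Suc n) + 1) * d ^ n \<le> d * d ^ n"
    using Suc(2)[of "Suc n"] by (intro mult_right_mono) auto
  ultimately show ?case by (simp add: from_digits_Suc algebra_simps)
qed (simp add: from_digits_def)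

lemma digit_from_digits:
  assumes d: "d > 0" and f: "\<And>l. l \<in> {1..n} \<Longrightarrow> f l < d" and j: "j \<in> {1..n}"
  shows "digit d j (from_digits d n f) = f j"
  using f j
proof (induct n)
  case (Suc n)
  have f': "\<And>l. l \<in> {1..n} \<Longrightarrow> f l < d" using Suc(2) by auto
  have less: "from_digits d n f < d ^ n" by (rule from_digits_less[OF f'])
  show ?case
  proof (cases "j \<le> n")
    case True
    then have "digit d j (from_digits d (Suc n) f) = digit d j (from_digits d (Suc n) f mod d ^ n)"
      using Suc(3) by (simp add: digit_mod_power[OF d])
    also have "from_digits d (Suc n) f mod d ^ n = from_digits d n f"
      using less by (simp add: from_digits_Suc)
    finally show ?thesis using Suc(1)[OF f'] True Suc(3) by simp
  next
    case False
    then have "j = Suc n" using Suc(3) by simp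
    moreover have "from_digits d (Suc n) f div d ^ n = f (Suc n)"
      using less d by (simp add: from_digits_Suc)
    ultimately show ?thesis unfolding digit_def using Suc(2)[of "Suc n"] by simp
  qed
qed simp

lemma from_digits_digit:
  assumes d: "d > 0" and "a < d ^ n"
  shows "from_digits d n (\<lambda>l. digit d l a) = a"
  using assms(2)
proof (induct n arbitrary: a)
  case (Suc n)
  have "from_digits d n (\<lambda>l. digit d l a) = from_digits d n (\<lambda>l. digit d l (a mod d ^ n))"
    by (rule from_digits_cong) (simp add: digit_mod_power[OF d])
  also have "\<dots> = a mod d ^ n" by (rule Suc(1)) (use d in simp)
  moreover have "digit d (Suc n) a = a div d ^ n"
    using Suc(2) by (simp add: digit_def less_mult_imp_div_less)
  ultimately show ?case by (simp add: from_digits_Suc mod_div_mult_eq)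
qed (simp add: from_digits_def)

lemma digits_eq_imp_eq:
  assumes d: "d > 0" and a: "a < d ^ n" and b: "b < d ^ n"
    and "\<And>j. j \<in> {1..n} \<Longrightarrow> digit d j a = digit d j b"
  shows "a = b"
proof -
  have "a = from_digits d n (\<lambda>l. digit d l a)" using from_digits_digit[OF d a] by simp
  also have "\<dots> = from_digits d n (\<lambda>l. digit d l b)" by (rule from_digits_cong) (rule assms(4))
  also have "\<dots> = b" by (rule from_digits_digit[OF d b])
  finally show ?thesis .
qed

lemma shift_digits_less: "d > 0 \<Longrightarrow> shift_digits d n v b < d ^ n"
  unfolding shift_digits_def by (rule from_digits_less) auto

lemma digit_shift_digits:
  "d > 0 \<Longrightarrow> j \<in> {1..n} \<Longrightarrow> digit d j (shift_digits d n v b) = (digit d j b + v j) mod d"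
  unfolding shift_digits_def by (rule digit_from_digits) auto

lemma shift_digits_cong:
  assumes "\<And>l. l \<in> {1..n} \<Longrightarrow> v l mod d = w l mod d"
  shows "shift_digits d n v b = shift_digits d n w b"
  unfolding shift_digits_def
proof (rule from_digits_cong)
  fix l assume "l \<in> {1..n}"
  then show "(digit d l b + v l) mod d = (digit d l b + w l) mod d"
    using assms by (metis mod_add_right_eq)
qed

lemma shift_digits_shift_digits:
  assumes d: "d > 0"
  shows "shift_digits d n v (shift_digits d n w b) = shift_digits d n (\<lambda>l. w l + v l) b"
  unfolding shift_digits_def[of d n v] shift_digits_def[of d n "\<lambda>l. w l + v l"]
  by (rule from_digits_cong) (simp add: digit_shift_digits[OF d] mod_add_left_eq add.assoc)

lemma shift_digits_id:
  assumes d: "d > 0" and b: "b < d ^ n" and v: "\<And>l. l \<in> {1..n} \<Longrightarrow> v l mod d = 0"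
  shows "shift_digits d n v b = b"
proof -
  have "shift_digits d n v b = shift_digits d n (\<lambda>_. 0) b"
    using v by (intro shift_digits_cong) simp
  also have "\<dots> = b"
    unfolding shift_digits_def using d b digit_less[OF d] by (simp add: from_digits_digit)
  finally show ?thesis .
qed

lemma shift_digits_inverse:
  assumes d: "d > 0" and b: "b < d ^ n"
  shows "shift_digits d n v (shift_digits d n (\<lambda>l. (d - 1) * v l) b) = b"
    and "shift_digits d n (\<lambda>l. (d - 1) * v l) (shift_digits d n v b) = b"
proof -
  have "(d - 1) * x + x = d * x" for x
    using d by (cases d) auto
  then show "shift_digits d n v (shift_digits d n (\<lambda>l. (d - 1) * v l) b) = b"
    and "shift_digits d n (\<lambda>l. (d - 1) * v l) (shift_digits d n v b) = b"
    unfolding shift_digits_shift_digits[OF d] by (simp_all add: shift_digits_id[OF d b] add.commute)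
qed

definition monomial_mat :: "nat \<Rightarrow> (nat \<Rightarrow> nat) \<Rightarrow> (nat \<Rightarrow> complex) \<Rightarrow> complex mat" where
  "monomial_mat N p f = mat N N (\<lambda>(a, b). if a = p b then f b else 0)"

lemma monomial_mat_carrier [simp]: "monomial_mat N p f \<in> carrier_mat N N"
  unfolding monomial_mat_def by simp

lemma monomial_mat_dim [simp]: "dim_row (monomial_mat N p f) = N" "dim_col (monomial_mat N p f) = N"
  unfolding monomial_mat_def by simp_all

lemma index_monomial_mat [simp]:
  "a < N \<Longrightarrow> b < N \<Longrightarrow> monomial_mat N p f $$ (a, b) = (if a = p b then f b else 0)"
  unfolding monomial_mat_def by simp

lemma monomial_mat_cong:
  assumes "\<And>b. b < N \<Longrightarrow> p b = p' b" "\<And>b. b < N \<Longrightarrow> f b = f' b"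
  shows "monomial_mat N p f = monomial_mat N p' f'"
  by (rule eq_matI) (use assms in auto)

lemma monomial_mat_mult:
  assumes q: "\<And>b. b < N \<Longrightarrow> q b < N"
  shows "monomial_mat N p f * monomial_mat N q g = monomial_mat N (\<lambda>b. p (q b)) (\<lambda>b. f (q b) * g b)"
proof (rule eq_matI)
  fix a b assume "a < dim_row (monomial_mat N (\<lambda>b. p (q b)) (\<lambda>b. f (q b) * g b))"
    "b < dim_col (monomial_mat N (\<lambda>b. p (q b)) (\<lambda>b. f (q b) * g b))"
  then have ab: "a < N" "b < N" by auto
  have "(monomial_mat N p f * monomial_mat N q g) $$ (a, b)
      = (\<Sum>k<N. monomial_mat N p f $$ (a, k) * monomial_mat N q g $$ (k, b))"
    by (rule index_mult_mat_square[OF monomial_mat_carrier monomial_mat_carrier ab])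
  also have "\<dots> = (\<Sum>k<N. if k = q b then (if a = p (q b) then f (q b) else 0) * g b else 0)"
    using ab by (intro sum.cong) auto
  finally show "(monomial_mat N p f * monomial_mat N q g) $$ (a, b)
      = monomial_mat N (\<lambda>b. p (q b)) (\<lambda>b. f (q b) * g b) $$ (a, b)"
    using ab q[OF ab(2)] by simp
qed auto

lemma mat_adjoint_monomial_mat:
  assumes "\<And>b. b < N \<Longrightarrow> p b < N" "\<And>b. b < N \<Longrightarrow> p' b < N"
    "\<And>b. b < N \<Longrightarrow> p (p' b) = b" "\<And>b. b < N \<Longrightarrow> p' (p b) = b"
  shows "mat_adjoint (monomial_mat N p f) = monomial_mat N p' (\<lambda>b. cnj (f (p' b)))"
proof (rule eq_matI)
  fix a b assume "a < dim_row (monomial_mat N p' (\<lambda>b. cnj (f (p' b))))"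
    "b < dim_col (monomial_mat N p' (\<lambda>b. cnj (f (p' b))))"
  then have ab: "a < N" "b < N" by auto
  then have "(b = p a) = (a = p' b)" using assms by metis
  then show "mat_adjoint (monomial_mat N p f) $$ (a, b) = monomial_mat N p' (\<lambda>b. cnj (f (p' b))) $$ (a, b)"
    using ab by auto
qed auto

lemma smult_monomial_mat: "c \<cdot>\<^sub>m monomial_mat N p f = monomial_mat N p (\<lambda>b. c * f b)"
  by (rule eq_matI) auto

lemma one_mat_eq_monomial_mat: "1\<^sub>m N = monomial_mat N (\<lambda>b. b) (\<lambda>_. 1)"
  by (rule eq_matI) auto

lemma diagonal_monomial_mat_pow:
  "monomial_mat N (\<lambda>b. b) f ^\<^sub>m k = monomial_mat N (\<lambda>b. b) (\<lambda>b. f b ^ k)"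
  by (induct k) (simp_all add: one_mat_eq_monomial_mat monomial_mat_mult mult.commute)

lemma shift_monomial_mat_pow:
  assumes d: "d > 0"
  shows "monomial_mat (d ^ n) (shift_digits d n v) (\<lambda>_. 1) ^\<^sub>m k
       = monomial_mat (d ^ n) (shift_digits d n (\<lambda>l. k * v l)) (\<lambda>_. 1)"
proof (induct k)
  case 0
  show ?case unfolding one_mat_eq_monomial_mat pow_mat.simps monomial_mat_dim
    by (rule monomial_mat_cong) (simp_all add: shift_digits_id[OF d])
next
  case (Suc k)
  then show ?case
    by (simp add: monomial_mat_mult shift_digits_less[OF d] shift_digits_shift_digits[OF d] algebra_simps)
qed

section \<open>The operators \<open>\<Lambda>\<^sub>i\<close>\<close>

text \<open>\<open>prefix_shift j\<close> is the digit shift performed by \<open>X\<^sub>1 \<dots> X\<^sub>j\<^sub>-\<^sub>1\<close>; \<open>X_inv_mat d n j\<close> is \<open>X\<^sub>j\<^sup>-\<^sup>1\<close>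
  and \<open>Z_ratio_mat d n j\<close> is \<open>Z\<^sub>j Z\<^sub>j\<^sub>+\<^sub>1\<^sup>-\<^sup>1\<close>.\<close>
definition prefix_shift :: "nat \<Rightarrow> nat \<Rightarrow> nat" where
  "prefix_shift j k = (if k \<in> {1..<j} then 1 else 0)"

definition X_inv_mat :: "nat \<Rightarrow> nat \<Rightarrow> nat \<Rightarrow> complex mat" where
  "X_inv_mat d n j = monomial_mat (d ^ n) (shift_digits d n (\<lambda>k. if k = j then d - 1 else 0)) (\<lambda>_. 1)"

definition Z_ratio_mat :: "nat \<Rightarrow> nat \<Rightarrow> nat \<Rightarrow> complex mat" where
  "Z_ratio_mat d n j = monomial_mat (d ^ n) (\<lambda>b. b)
     (\<lambda>b. omega_pow d (real (digit d j b) - real (digit d (j + 1) b)))"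

lemma Xop_eq_monomial_mat:
  assumes d: "d \<ge> 2" and l: "l \<in> {1..n}"
  shows "Xop d n l = monomial_mat (d ^ n) (shift_digits d n (\<lambda>k. if k = l then 1 else 0)) (\<lambda>_. 1)"
proof (rule eq_matI)
  fix a b
  assume "a < dim_row (monomial_mat (d ^ n) (shift_digits d n (\<lambda>k. if k = l then 1 else 0)) (\<lambda>_. 1))"
    "b < dim_col (monomial_mat (d ^ n) (shift_digits d n (\<lambda>k. if k = l then 1 else 0)) (\<lambda>_. 1))"
  then have ab: "a < d ^ n" "b < d ^ n" by auto
  have d0: "d > 0" using d by simp
  have "(digit d l a = (digit d l b + 1) mod d \<and> (\<forall>j\<in>{1..n} - {l}. digit d j a = digit d j b))
      \<longleftrightarrow> a = shift_digits d n (\<lambda>k. if k = l then 1 else 0) b"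
  proof
    assume H: "digit d l a = (digit d l b + 1) mod d \<and> (\<forall>j\<in>{1..n} - {l}. digit d j a = digit d j b)"
    show "a = shift_digits d n (\<lambda>k. if k = l then 1 else 0) b"
    proof (rule digits_eq_imp_eq[OF d0 ab(1) shift_digits_less[OF d0]])
      fix j assume j: "j \<in> {1..n}"
      show "digit d j a = digit d j (shift_digits d n (\<lambda>k. if k = l then 1 else 0) b)"
        using H j digit_less[OF d0, of j b] by (auto simp: digit_shift_digits[OF d0 j])
    qed
  next
    assume "a = shift_digits d n (\<lambda>k. if k = l then 1 else 0) b"
    then show "digit d l a = (digit d l b + 1) mod d \<and> (\<forall>j\<in>{1..n} - {l}. digit d j a = digit d j b)"
      using l digit_less[OF d0] by (auto simp: digit_shift_digits[OF d0])
  qed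
  then show "Xop d n l $$ (a, b)
      = monomial_mat (d ^ n) (shift_digits d n (\<lambda>k. if k = l then 1 else 0)) (\<lambda>_. 1) $$ (a, b)"
    using ab unfolding Xop_def by simp
qed (auto simp: Xop_def)

lemma Zop_eq_monomial_mat: "Zop d n j = monomial_mat (d ^ n) (\<lambda>b. b) (\<lambda>b. omega_pow d (real (digit d j b)))"
  unfolding Zop_def by (rule eq_matI) auto

lemma Xprod_eq_monomial_mat:
  assumes d: "d \<ge> 2" and "j \<le> n + 1"
  shows "Xprod d n j = monomial_mat (d ^ n) (shift_digits d n (prefix_shift j)) (\<lambda>_. 1)"
proof -
  have d0: "d > 0" using d by simp
  have foldr_Xop: "set xs \<subseteq> {1..n} \<Longrightarrow> distinct xs \<Longrightarrow> foldr (\<lambda>l M. Xop d n l * M) xs (1\<^sub>m (d ^ n))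
      = monomial_mat (d ^ n) (shift_digits d n (\<lambda>k. if k \<in> set xs then 1 else 0)) (\<lambda>_. 1)" for xs
  proof (induct xs)
    case Nil
    show ?case
      by (simp add: one_mat_eq_monomial_mat) (rule monomial_mat_cong, simp_all add: shift_digits_id[OF d0])
  next
    case (Cons l xs)
    then have "l \<in> {1..n}" "l \<notin> set xs" by auto
    moreover have "(\<lambda>k. (if k \<in> set xs then 1 else 0) + (if k = l then 1 else 0 :: nat))
        = (\<lambda>k. if k \<in> set (l # xs) then 1 else 0)" if "l \<notin> set xs"
      using that by (auto simp: fun_eq_iff)
    ultimately show ?case
      using Cons by (simp add: Xop_eq_monomial_mat[OF d] monomial_mat_mult shift_digits_less[OF d0]
          shift_digits_shift_digits[OF d0])
  qed
  have "Xprod d n j = monomial_mat (d ^ n) (shift_digits d n (\<lambda>k. if k \<in> set [1..<j] then 1 else 0)) (\<lambda>_. 1)"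
    unfolding Xprod_def using assms by (intro foldr_Xop) auto
  also have "(\<lambda>k. if k \<in> set [1..<j] then 1 else 0) = prefix_shift j"
    by (auto simp: prefix_shift_def fun_eq_iff)
  finally show ?thesis .
qed

lemma gamma_odd_eq:
  assumes d: "d \<ge> 2" and j: "1 \<le> j" "j \<le> n"
  shows "gamma d n (2 * j - 1)
       = monomial_mat (d ^ n) (shift_digits d n (prefix_shift j)) (\<lambda>b. omega_pow d (real (digit d j b)))"
proof -
  have "odd (2 * j - 1)" and "(2 * j - 1 + 1) div 2 = j" using j by auto
  then show ?thesis unfolding gamma_def using j
    by (simp add: Xprod_eq_monomial_mat[OF d] Zop_eq_monomial_mat monomial_mat_mult)
qed

lemma gamma_even_eq:
  assumes d: "d \<ge> 2" and j: "1 \<le> j" "j \<le> n"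
  shows "gamma d n (2 * j) = monomial_mat (d ^ n) (shift_digits d n (prefix_shift (j + 1)))
      (\<lambda>b. omega_pow d ((real d + 1) / 2) * omega_pow d (real (digit d j b)))"
  unfolding gamma_def using j
  by (simp add: Xprod_eq_monomial_mat[OF d] Zop_eq_monomial_mat monomial_mat_mult smult_monomial_mat)

lemma mat_adjoint_shift_monomial_mat:
  assumes "d > 0"
  shows "mat_adjoint (monomial_mat (d ^ n) (shift_digits d n v) f)
       = monomial_mat (d ^ n) (shift_digits d n (\<lambda>l. (d - 1) * v l))
           (\<lambda>b. cnj (f (shift_digits d n (\<lambda>l. (d - 1) * v l) b)))"
  by (rule mat_adjoint_monomial_mat) (use shift_digits_less[OF assms] shift_digits_inverse[OF assms] in auto)

lemma Lambda_odd_eq: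
  assumes d: "d \<ge> 2" and j: "1 \<le> j" "j \<le> n"
  shows "Lambda d n (2 * j - 1) = X_inv_mat d n j"
proof -
  have d0: "d > 0" using d by simp
  let ?W = "omega_pow d ((real d + 1) / 2)" and ?om = "\<lambda>b. omega_pow d (real (digit d j b))"
  let ?inv = "shift_digits d n (\<lambda>l. (d - 1) * prefix_shift (j + 1) l)"
  have succ: "2 * j - 1 + 1 = 2 * j" using j by simp
  have "Lambda d n (2 * j - 1) = ?W \<cdot>\<^sub>m (monomial_mat (d ^ n) (shift_digits d n (prefix_shift j)) ?om *
      monomial_mat (d ^ n) ?inv (\<lambda>b. cnj (?W * ?om (?inv b))))"
    unfolding Lambda_def succ gamma_odd_eq[OF d j] gamma_even_eq[OF d j] mat_adjoint_shift_monomial_mat[OF d0] ..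
  also have "\<dots> = monomial_mat (d ^ n) (\<lambda>b. shift_digits d n (prefix_shift j) (?inv b))
      (\<lambda>b. (?W * cnj ?W) * (?om (?inv b) * cnj (?om (?inv b))))"
    by (simp add: monomial_mat_mult shift_digits_less[OF d0] smult_monomial_mat ac_simps)
  also have "\<dots> = X_inv_mat d n j" unfolding X_inv_mat_def
  proof (rule monomial_mat_cong)
    fix b
    show "shift_digits d n (prefix_shift j) (?inv b) = shift_digits d n (\<lambda>k. if k = j then d - 1 else 0) b"
      unfolding shift_digits_shift_digits[OF d0]
      by (rule shift_digits_cong) (use d in \<open>auto simp: prefix_shift_def\<close>)
  qed simp
  finally show ?thesis .
qed

lemma Lambda_even_eq:
  assumes d: "d \<ge> 2" and j: "1 \<le> j" "j + 1 \<le> n"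
  shows "Lambda d n (2 * j) = Z_ratio_mat d n j"
proof -
  have d0: "d > 0" using d by simp
  let ?W = "omega_pow d ((real d + 1) / 2)" and ?om = "\<lambda>i b. omega_pow d (real (digit d i b))"
  let ?inv = "shift_digits d n (\<lambda>l. (d - 1) * prefix_shift (j + 1) l)"
  have succ: "2 * j + 1 = 2 * (j + 1) - 1" by simp
  have j': "1 \<le> j + 1" "j + 1 \<le> n" "j \<le> n" using j by auto
  have "Lambda d n (2 * j) = ?W \<cdot>\<^sub>m (monomial_mat (d ^ n) (shift_digits d n (prefix_shift (j + 1)))
      (\<lambda>b. ?W * ?om j b) * monomial_mat (d ^ n) ?inv (\<lambda>b. cnj (?om (j + 1) (?inv b))))"
    unfolding Lambda_def succ gamma_odd_eq[OF d j'(1,2)] gamma_even_eq[OF d j(1) j'(3)]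
      mat_adjoint_shift_monomial_mat[OF d0] ..
  also have "\<dots> = monomial_mat (d ^ n) (\<lambda>b. shift_digits d n (prefix_shift (j + 1)) (?inv b))
      (\<lambda>b. ?W * (?W * ?om j (?inv b) * cnj (?om (j + 1) (?inv b))))"
    by (simp add: monomial_mat_mult shift_digits_less[OF d0] smult_monomial_mat)
  also have "\<dots> = Z_ratio_mat d n j" unfolding Z_ratio_mat_def
  proof (rule monomial_mat_cong)
    fix b assume b: "b < d ^ n"
    show "shift_digits d n (prefix_shift (j + 1)) (?inv b) = b"
      by (rule shift_digits_inverse(1)[OF d0 b])
    have jn: "j \<in> {1..n}" "j + 1 \<in> {1..n}" using j by auto
    have dj: "digit d j (?inv b) = (digit d j b + (d - 1)) mod d"
      using digit_shift_digits[OF d0 jn(1)] j by (simp add: prefix_shift_def)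
    have dj1: "digit d (j + 1) (?inv b) = digit d (j + 1) b"
      using digit_shift_digits[OF d0 jn(2)] digit_less[OF d0] by (simp add: prefix_shift_def)
    have "?W * (?W * ?om j (?inv b) * cnj (?om (j + 1) (?inv b)))
       = omega_pow d ((real d + 1) / 2 + (real d + 1) / 2 + real (digit d j b + (d - 1)) + - real (digit d (j + 1) b))"
      unfolding dj dj1 omega_pow_of_nat_mod[OF d0] cnj_omega_pow omega_pow_add by (simp add: ac_simps)
    also have "(real d + 1) / 2 + (real d + 1) / 2 + real (digit d j b + (d - 1)) + - real (digit d (j + 1) b)
        = (real (digit d j b) - real (digit d (j + 1) b)) + real_of_int 2 * real d"
      using d by (simp add: of_nat_diff field_simps)
    also have "omega_pow d \<dots> = omega_pow d (real (digit d j b) - real (digit d (j + 1) b))"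
      by (rule omega_pow_periodic[OF d0])
    finally show "?W * (?W * ?om j (?inv b) * cnj (?om (j + 1) (?inv b)))
        = omega_pow d (real (digit d j b) - real (digit d (j + 1) b))" .
  qed
  finally show ?thesis .
qed

lemma X_inv_mat_carrier [simp]: "X_inv_mat d n j \<in> carrier_mat (d ^ n) (d ^ n)"
  unfolding X_inv_mat_def by simp

lemma Z_ratio_mat_carrier [simp]: "Z_ratio_mat d n j \<in> carrier_mat (d ^ n) (d ^ n)"
  unfolding Z_ratio_mat_def by simp

lemma X_inv_mat_adjoint_mult:
  assumes "d > 0"
  shows "mat_adjoint (X_inv_mat d n j) * X_inv_mat d n j = 1\<^sub>m (d ^ n)"
  unfolding X_inv_mat_def mat_adjoint_shift_monomial_mat[OF assms] one_mat_eq_monomial_mat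
  by (simp add: monomial_mat_mult shift_digits_less[OF assms])
    (rule monomial_mat_cong, use shift_digits_inverse(2)[OF assms] in auto)

lemma Z_ratio_mat_adjoint_mult: "mat_adjoint (Z_ratio_mat d n j) * Z_ratio_mat d n j = 1\<^sub>m (d ^ n)"
proof -
  let ?f = "\<lambda>b. omega_pow d (real (digit d j b) - real (digit d (j + 1) b))"
  have "mat_adjoint (Z_ratio_mat d n j) = monomial_mat (d ^ n) (\<lambda>b. b) (\<lambda>b. cnj (?f b))"
    unfolding Z_ratio_mat_def by (rule mat_adjoint_monomial_mat) auto
  then show ?thesis unfolding Z_ratio_mat_def one_mat_eq_monomial_mat
    by (simp add: monomial_mat_mult) (rule monomial_mat_cong, auto simp: mult.commute)
qed

lemma X_inv_mat_pow:
  assumes "d > 0"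
  shows "X_inv_mat d n j ^\<^sub>m d = 1\<^sub>m (d ^ n)"
  unfolding X_inv_mat_def shift_monomial_mat_pow[OF assms] one_mat_eq_monomial_mat
  by (rule monomial_mat_cong) (auto intro: shift_digits_id[OF assms])

lemma Z_ratio_mat_pow:
  assumes "d > 0"
  shows "Z_ratio_mat d n j ^\<^sub>m d = 1\<^sub>m (d ^ n)"
  unfolding Z_ratio_mat_def diagonal_monomial_mat_pow one_mat_eq_monomial_mat
proof (rule monomial_mat_cong)
  fix b
  let ?e = "real (digit d j b) - real (digit d (j + 1) b)"
  have "real d * ?e = 0 + real_of_int (int (digit d j b) - int (digit d (j + 1) b)) * real d"
    by (simp add: algebra_simps)
  then show "omega_pow d ?e ^ d = 1"
    unfolding omega_pow_power by (simp only: omega_pow_periodic[OF assms] omega_pow_0)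
qed simp

lemma X_inv_mat_commute:
  assumes "d > 0"
  shows "X_inv_mat d n j * X_inv_mat d n j' = X_inv_mat d n j' * X_inv_mat d n j"
  unfolding X_inv_mat_def
  by (simp add: monomial_mat_mult shift_digits_less[OF assms] shift_digits_shift_digits[OF assms] add.commute)

lemma Z_ratio_mat_commute: "Z_ratio_mat d n j * Z_ratio_mat d n j' = Z_ratio_mat d n j' * Z_ratio_mat d n j"
  unfolding Z_ratio_mat_def by (simp add: monomial_mat_mult mult.commute)

lemma X_inv_Z_ratio_mat_commute:
  assumes d: "d > 0" and "j \<in> {1..n}" and j': "1 \<le> j'" "j' + 1 \<le> n" and "j \<noteq> j'" "j \<noteq> j' + 1"
  shows "X_inv_mat d n j * Z_ratio_mat d n j' = Z_ratio_mat d n j' * X_inv_mat d n j"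
  unfolding X_inv_mat_def Z_ratio_mat_def
proof (simp add: monomial_mat_mult shift_digits_less[OF d], rule monomial_mat_cong)
  fix b
  let ?v = "\<lambda>k. if k = j then d - 1 else 0"
  have jn: "j' \<in> {1..n}" "j' + 1 \<in> {1..n}" using j' by auto
  have "digit d j' (shift_digits d n ?v b) = digit d j' b"
    and "digit d (j' + 1) (shift_digits d n ?v b) = digit d (j' + 1) b"
    using digit_shift_digits[OF d jn(1)] digit_shift_digits[OF d jn(2)] assms digit_less[OF d] by auto
  then show "omega_pow d (real (digit d j' b) - real (digit d (Suc j') b)) =
      omega_pow d (real (digit d j' (shift_digits d n ?v b)) - real (digit d (Suc j') (shift_digits d n ?v b)))"
    by simp
qed simp

text \<open>Both relations come from \<open>X Z = \<omega>\<^sup>-\<^sup>1 Z X\<close> on the tensor factor the two operators share.\<close>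
lemma X_inv_Z_ratio_mat_q_commute:
  assumes d: "d > 0" and j: "1 \<le> j" "j + 1 \<le> n"
  shows "X_inv_mat d n j * Z_ratio_mat d n j = omega_pow d 1 \<cdot>\<^sub>m (Z_ratio_mat d n j * X_inv_mat d n j)"
  unfolding X_inv_mat_def Z_ratio_mat_def
proof (simp add: monomial_mat_mult shift_digits_less[OF d] smult_monomial_mat, rule monomial_mat_cong)
  fix b
  let ?v = "\<lambda>k. if k = j then d - 1 else 0"
  let ?x = "digit d j b" and ?y = "digit d (j + 1) b"
  have jn: "j \<in> {1..n}" "j + 1 \<in> {1..n}" using j by auto
  have e1: "digit d j (shift_digits d n ?v b) = (?x + (d - 1)) mod d"
    using digit_shift_digits[OF d jn(1)] by simp
  have e2: "digit d (j + 1) (shift_digits d n ?v b) = ?y"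
    using digit_shift_digits[OF d jn(2)] digit_less[OF d] by simp
  have "omega_pow d 1 * omega_pow d (real ((?x + (d - 1)) mod d) - real ?y)
      = omega_pow d (real ((?x + (d - 1)) mod d) + (1 - real ?y))"
    by (simp add: algebra_simps flip: omega_pow_add)
  also have "\<dots> = omega_pow d (real (?x + (d - 1)) + (1 - real ?y))"
    by (simp only: omega_pow_add omega_pow_of_nat_mod[OF d])
  also have "real (?x + (d - 1)) + (1 - real ?y) = (real ?x - real ?y) + real_of_int 1 * real d"
    using d by (simp add: of_nat_diff)
  also have "omega_pow d \<dots> = omega_pow d (real ?x - real ?y)"
    by (rule omega_pow_periodic[OF d])
  finally show "omega_pow d (real (digit d j b) - real (digit d (Suc j) b)) =
      omega_pow d 1 * omega_pow d (real (digit d j (shift_digits d n ?v b))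
        - real (digit d (Suc j) (shift_digits d n ?v b)))"
    using e1 e2 by simp
qed simp

lemma Z_ratio_X_inv_mat_q_commute:
  assumes d: "d > 0" and j: "1 \<le> j" "j + 1 \<le> n"
  shows "Z_ratio_mat d n j * X_inv_mat d n (j + 1) = omega_pow d 1 \<cdot>\<^sub>m (X_inv_mat d n (j + 1) * Z_ratio_mat d n j)"
  unfolding X_inv_mat_def Z_ratio_mat_def
proof (simp add: monomial_mat_mult shift_digits_less[OF d] smult_monomial_mat, rule monomial_mat_cong)
  fix b
  let ?v = "\<lambda>k. if k = Suc j then d - 1 else 0"
  let ?x = "digit d j b" and ?y = "digit d (j + 1) b"
  have jn: "j \<in> {1..n}" "j + 1 \<in> {1..n}" using j by auto
  have e1: "digit d j (shift_digits d n ?v b) = ?x"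
    using digit_shift_digits[OF d jn(1)] digit_less[OF d] by simp
  have e2: "digit d (j + 1) (shift_digits d n ?v b) = (?y + (d - 1)) mod d"
    using digit_shift_digits[OF d jn(2)] by simp
  have "omega_pow d (real ?x - real ((?y + (d - 1)) mod d))
      = cnj (omega_pow d (real ((?y + (d - 1)) mod d) + - real ?x))"
    by (simp add: cnj_omega_pow algebra_simps)
  also have "\<dots> = cnj (omega_pow d (real (?y + (d - 1)) + - real ?x))"
    by (simp only: omega_pow_add omega_pow_of_nat_mod[OF d])
  also have "\<dots> = omega_pow d (real ?x - real (?y + (d - 1)))"
    by (simp add: cnj_omega_pow algebra_simps)
  also have "real ?x - real (?y + (d - 1)) = (1 + (real ?x - real ?y)) + real_of_int (-1) * real d"
    using d by (simp add: of_nat_diff)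
  also have "omega_pow d \<dots> = omega_pow d (1 + (real ?x - real ?y))"
    by (rule omega_pow_periodic[OF d])
  also have "\<dots> = omega_pow d 1 * omega_pow d (real ?x - real ?y)"
    by (rule omega_pow_add)
  finally show "omega_pow d (real (digit d j (shift_digits d n ?v b)) - real (digit d (Suc j) (shift_digits d n ?v b))) =
      omega_pow d 1 * omega_pow d (real (digit d j b) - real (digit d (Suc j) b))"
    using e1 e2 by simp
qed simp

lemma Lambda_cases:
  assumes d: "d \<ge> 2" and i: "i \<in> {1..2 * n - 1}"
  obtains (odd) j where "i = 2 * j - 1" "1 \<le> j" "j \<le> n" "Lambda d n i = X_inv_mat d n j"
    | (even) j where "i = 2 * j" "1 \<le> j" "j + 1 \<le> n" "Lambda d n i = Z_ratio_mat d n j"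
proof (cases "odd i")
  case True
  then obtain k where "i = 2 * k + 1" by (rule oddE)
  with i have j: "i = 2 * (k + 1) - 1" "1 \<le> k + 1" "k + 1 \<le> n" by auto
  show ?thesis by (rule odd[OF j]) (unfold j(1), rule Lambda_odd_eq[OF d j(2,3)])
next
  case False
  then obtain k where "i = 2 * k" by (auto elim: evenE)
  with i have j: "i = 2 * k" "1 \<le> k" "k + 1 \<le> n" by auto
  show ?thesis by (rule even[OF j]) (unfold j(1), rule Lambda_even_eq[OF d j(2,3)])
qed

lemma Lambda_carrier:
  assumes "d \<ge> 2" and "i \<in> {1..2 * n - 1}"
  shows "Lambda d n i \<in> carrier_mat (d ^ n) (d ^ n)"
  using assms by (cases rule: Lambda_cases) simp_all

lemma Lambda_adjoint_mult:
  assumes d: "d \<ge> 2" and i: "i \<in> {1..2 * n - 1}"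
  shows "mat_adjoint (Lambda d n i) * Lambda d n i = 1\<^sub>m (d ^ n)"
proof -
  have d0: "d > 0" using d by simp
  from d i show ?thesis
    by (cases rule: Lambda_cases) (simp_all add: X_inv_mat_adjoint_mult[OF d0] Z_ratio_mat_adjoint_mult)
qed

lemma Lambda_pow:
  assumes d: "d \<ge> 2" and i: "i \<in> {1..2 * n - 1}"
  shows "Lambda d n i ^\<^sub>m d = 1\<^sub>m (d ^ n)"
proof -
  have d0: "d > 0" using d by simp
  from d i show ?thesis
    by (cases rule: Lambda_cases) (simp_all add: X_inv_mat_pow[OF d0] Z_ratio_mat_pow[OF d0])
qed

lemma Lambda_commute:
  assumes d: "d \<ge> 2" and i: "i \<in> {1..2 * n - 1}" and i': "i' \<in> {1..2 * n - 1}"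
    and far: "i + 1 < i' \<or> i' + 1 < i"
  shows "Lambda d n i * Lambda d n i' = Lambda d n i' * Lambda d n i"
proof -
  have d0: "d > 0" using d by simp
  show ?thesis
    using d i
  proof (cases rule: Lambda_cases)
    case (odd j)
    note i_odd = odd
    from d i' show ?thesis
    proof (cases rule: Lambda_cases)
      case (odd j')
      then show ?thesis using i_odd(4) by (simp add: X_inv_mat_commute[OF d0])
    next
      case (even j')
      have "j \<noteq> j'" "j \<noteq> j' + 1" using i_odd(1) even(1) far by auto
      then have "X_inv_mat d n j * Z_ratio_mat d n j' = Z_ratio_mat d n j' * X_inv_mat d n j"
        using i_odd(2,3) by (intro X_inv_Z_ratio_mat_commute[OF d0 _ even(2,3)]) auto
      then show ?thesis using i_odd(4) even(4) by simp
    qed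
  next
    case (even j)
    note i_even = even
    from d i' show ?thesis
    proof (cases rule: Lambda_cases)
      case (odd j')
      have "j' \<noteq> j" "j' \<noteq> j + 1" using odd(1) i_even(1) far by auto
      then have "X_inv_mat d n j' * Z_ratio_mat d n j = Z_ratio_mat d n j * X_inv_mat d n j'"
        using odd(2,3) by (intro X_inv_Z_ratio_mat_commute[OF d0 _ i_even(2,3)]) auto
      then show ?thesis using odd(4) i_even(4) by simp
    next
      case (even j')
      then show ?thesis using i_even(4) by (simp add: Z_ratio_mat_commute)
    qed
  qed
qed

lemma Lambda_q_commute:
  assumes d: "d \<ge> 2" and i: "i \<in> {1..2 * n - 2}"
  shows "Lambda d n i * Lambda d n (i + 1) = omega_pow d 1 \<cdot>\<^sub>m (Lambda d n (i + 1) * Lambda d n i)"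
proof -
  have d0: "d > 0" using d by simp
  from i have "i \<in> {1..2 * n - 1}" by auto
  with d show ?thesis
  proof (cases rule: Lambda_cases)
    case (odd j)
    with i have "j + 1 \<le> n" "i + 1 = 2 * j" by auto
    with odd show ?thesis
      using Lambda_even_eq[OF d] X_inv_Z_ratio_mat_q_commute[OF d0] by simp
  next
    case (even j)
    then have "i + 1 = 2 * (j + 1) - 1" by simp
    with even show ?thesis
      using Lambda_odd_eq[OF d, of "j + 1" n] Z_ratio_X_inv_mat_q_commute[OF d0] by simp
  qed
qed

section \<open>The braid group representation\<close>

lemma int_mod_add_diff:
  assumes "a < d"
  shows "int ((y + (d - a)) mod d) = (int y - int a) mod int d"
proof -
  have "int ((y + (d - a)) mod d) = (int y - int a + int d) mod int d"
    using assms by (simp add: of_nat_mod of_nat_diff algebra_simps)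
  then show ?thesis by simp
qed

lemma cseq_of_nat_mod_diff:
  assumes "d > 0" and "a < d"
  shows "cseq d r s (int ((y + (d - a)) mod d)) = cseq d r s (int y - int a)"
  unfolding int_mod_add_diff[OF assms(2)] cseq_mod[OF assms(1)] ..

lemma omega_pow_1_power_mod_diff:
  assumes "d > 0" and "a < d"
  shows "omega_pow d 1 ^ (y * ((x + (d - a)) mod d)) = omega_pow d (of_int (int y * (int x - int a)))"
  by (rule omega_pow_1_power[OF assms(1)]) (simp only: of_nat_mult int_mod_add_diff[OF assms(2)] mod_mult_right_eq)

lemma cseq_nat_autocorrelation:
  assumes d: "d > 0" and s: "s \<in> {1, -1::int}" and t: "t < d"
  shows "(\<Sum>b\<in>{0..<d}. cnj (cseq d r s (int b)) * cseq d r s (int ((t + b) mod d)))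
       = (if t = 0 then of_nat d else 0)"
proof -
  have "cseq d r s (int ((t + b) mod d)) = cseq d r s (int b + int t)" for b
    using cseq_mod[OF d, of r s "int b + int t"] by (simp add: of_nat_mod add.commute)
  then have "(\<Sum>b\<in>{0..<d}. cnj (cseq d r s (int b)) * cseq d r s (int ((t + b) mod d)))
      = cnj (\<Sum>m\<in>{0..<int d}. cseq d r s m * cnj (cseq d r s (m + int t)))"
    by (simp add: sum_int_atLeastLessThan_nat)
  also have "\<dots> = (if t = 0 then of_nat d else 0)"
    using cseq_autocorrelation[OF d s, of "int t" r] t by simp
  finally show ?thesis .
qed

text \<open>Condition (ii) with \<open>k = x\<close>, \<open>m = y\<close>; the right-hand side is reached by the reflection \<open>t \<mapsto> x - t\<close>.\<close>
lemma cseq_nat_braid_identity: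
  assumes d: "d > 0" and s: "s \<in> {1, -1::int}"
  shows "(\<Sum>a\<in>{0..<d}. cseq d r s (int a) * cseq d r s (int x) * cseq d r s (int ((y + (d - a)) mod d))
            * omega_pow d 1 ^ (a * x))
       = (\<Sum>a\<in>{0..<d}. cseq d r s (int a) * cseq d r s (int y) * cseq d r s (int ((x + (d - a)) mod d))
            * omega_pow d 1 ^ (y * ((x + (d - a)) mod d)))"
proof -
  let ?c = "cseq d r s" and ?X = "int x" and ?Y = "int y"
  let ?h = "\<lambda>t. ?c t * ?c ?Y * ?c (?X - t) * omega_pow d (of_int (?Y * (?X - t)))"
  have h_periodic: "?h (z mod int d) = ?h z" for z
  proof -
    have "?c (?X - z mod int d) = ?c (?X - z)"
      by (metis cseq_mod[OF d] mod_diff_right_eq)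
    moreover have "omega_pow d (of_int (?Y * (?X - z mod int d))) = omega_pow d (of_int (?Y * (?X - z)))"
      by (metis omega_pow_of_int_mod[OF d] mod_diff_right_eq mod_mult_right_eq)
    ultimately show ?thesis by (simp add: cseq_mod[OF d])
  qed
  have "(\<Sum>a\<in>{0..<d}. ?c (int a) * ?c ?X * ?c (int ((y + (d - a)) mod d)) * omega_pow d 1 ^ (a * x))
      = (\<Sum>t\<in>{0..<int d}. ?c t * ?c ?X * ?c (?Y - t) * omega_pow d (of_int (1 * ?X * t)))"
    unfolding sum_int_atLeastLessThan_nat
    using cseq_of_nat_mod_diff[OF d] omega_pow_1_power[OF d]
    by (intro sum.cong) (simp_all add: mult.commute)
  also have "\<dots> = (\<Sum>t\<in>{0..<int d}. ?c t * ?c (?X - t) * ?c ?Y * omega_pow d (of_int (1 * ?Y * t)))"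
    by (rule cseq_triple_sum_identity[OF d s, symmetric]) simp
  also have "\<dots> = (\<Sum>t\<in>{0..<int d}. ?h (?X - t))"
    by (rule sum.cong) (simp_all add: ac_simps)
  also have "\<dots> = (\<Sum>t\<in>{0..<int d}. ?h t)"
    by (rule sum_mod_reflect[where g = ?h, OF d h_periodic])
  also have "\<dots> = (\<Sum>a\<in>{0..<d}. ?c (int a) * ?c ?Y * ?c (int ((x + (d - a)) mod d))
      * omega_pow d 1 ^ (y * ((x + (d - a)) mod d)))"
    unfolding sum_int_atLeastLessThan_nat
    using cseq_of_nat_mod_diff[OF d] omega_pow_1_power_mod_diff[OF d]
    by (intro sum.cong) simp_all
  finally show ?thesis .
qed

lemma Uop_eq_power_series_mat:
  "Uop d r s n i = (1 / complex_of_real (sqrt (real d))) \<cdot>\<^sub>m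
     power_series_mat (d ^ n) d (\<lambda>m. cseq d r s (int m)) (Lambda d n i)"
  unfolding Uop_def power_series_mat_def ..

lemma Uop_unitary:
  assumes d: "d \<ge> 2" and s: "s \<in> {1, -1::int}" and i: "i \<in> {1..2 * n - 1}"
  shows "unitary_mat (d ^ n) (Uop d r s n i)"
  unfolding Uop_eq_power_series_mat
  using d by (intro unitary_power_series_mat Lambda_carrier[OF d i] Lambda_adjoint_mult[OF d i]
      Lambda_pow[OF d i] cseq_nat_autocorrelation[OF _ s]) simp_all

lemma Uop_commute:
  assumes d: "d \<ge> 2" and i: "i \<in> {1..2 * n - 1}" and j: "j \<in> {1..2 * n - 1}"
    and far: "i + 1 < j \<or> j + 1 < i"
  shows "Uop d r s n i * Uop d r s n j = Uop d r s n j * Uop d r s n i"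
  unfolding Uop_eq_power_series_mat
  by (simp add: smult_mult_smult_mat mult.commute power_series_mat_commute[OF Lambda_carrier[OF d i]
      Lambda_carrier[OF d j] Lambda_commute[OF d i j far]])

lemma Uop_braid:
  assumes d: "d \<ge> 2" and s: "s \<in> {1, -1::int}" and i: "i \<in> {1..2 * n - 2}"
  shows "Uop d r s n i * Uop d r s n (i + 1) * Uop d r s n i
       = Uop d r s n (i + 1) * Uop d r s n i * Uop d r s n (i + 1)"
proof -
  have d0: "d > 0" using d by simp
  have i1: "i \<in> {1..2 * n - 1}" "i + 1 \<in> {1..2 * n - 1}" using i by auto
  show ?thesis
    unfolding Uop_eq_power_series_mat
    using power_series_mat_braid[OF Lambda_carrier[OF d i1(1)] Lambda_carrier[OF d i1(2)]
        Lambda_pow[OF d i1(1)] Lambda_pow[OF d i1(2)] Lambda_q_commute[OF d i] d0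
        cseq_nat_braid_identity[OF d0 s]]
    by (simp add: smult_mult_smult_mat)
qed

theorem mainTheorem3:
  fixes d :: nat
  assumes "d \<ge> 2"
  shows "(\<forall>r<d. \<forall>s\<in>{1, -1::int}.
            (\<forall>m. cseq d r s (m + int d) = cseq d r s m)
          \<and> (\<forall>t\<in>{0..<int d}. (\<Sum>m\<in>{0..<int d}. cseq d r s m * cnj (cseq d r s (m + t)))
                 = (if t = 0 then of_nat d else 0))
          \<and> (\<forall>k\<in>{0..<int d}. \<forall>m\<in>{0..<int d}.
                 (\<Sum>t\<in>{0..<int d}. cseq d r s t * cseq d r s ((k - t) mod int d) * cseq d r s m
                     * omega_pow d (real_of_int (m * t)))
               = (\<Sum>t\<in>{0..<int d}. cseq d r s t * cseq d r s k * cseq d r s ((m - t) mod int d)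
                     * omega_pow d (real_of_int (k * t))))
          \<and> (\<forall>n\<ge>1.
                (\<forall>i\<in>{1..2*n-1}. unitary_mat (d ^ n) (Uop d r s n i))
              \<and> (\<forall>i\<in>{1..2*n-1}. \<forall>j\<in>{1..2*n-1}. (i + 1 < j \<or> j + 1 < i) \<longrightarrow>
                    Uop d r s n i * Uop d r s n j = Uop d r s n j * Uop d r s n i)
              \<and> (\<forall>i\<in>{1..2*n-2}.
                    Uop d r s n i * Uop d r s n (i + 1) * Uop d r s n i
                  = Uop d r s n (i + 1) * Uop d r s n i * Uop d r s n (i + 1))))
       \<and> (d \<ge> 3 \<longrightarrow>
           (\<forall>r1<d. \<forall>r2<d. \<forall>s1\<in>{1, -1::int}. \<forall>s2\<in>{1, -1::int}. (r1, s1) \<noteq> (r2, s2) \<longrightarrow>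
              (\<exists>m\<in>{0..<int d}. cseq d r1 s1 m \<noteq> cseq d r2 s2 m)))"
proof -
  have d0: "d > 0" using assms by simp
  show ?thesis
    using cseq_add_period[OF d0] cseq_autocorrelation[OF d0] cseq_braid_identity[OF d0]
      Uop_unitary[OF assms] Uop_commute[OF assms] Uop_braid[OF assms] cseq_injective
    by simp
qed

end
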